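(* Let $\mathcal{C}$ be an Abelian category and $\mathcal{F},\mathcal{G}$ classes of objects of $\mathcal{C}$ closed under extensions. Let $m\in\mathbb{Z}$, $C$ an object of $\mathcal{C}$ and let $S=0\to D^{m+1}(C)\to Z\to X\to0$ and $S'=0\to Y\to Z\to D^m(C)\to0$ be short exact sequences in $\mathrm{Ch}(\mathcal{C})$. Then: (1) $S$ is $\mathrm{Hom}(\mathrm{dw}\widetilde{\mathcal{F}},-)$-exact if and only if it is $\mathrm{Hom}(\widetilde{\mathcal{F}},-)$-exact; (2) $S$ is $\mathrm{Hom}(-,\mathrm{dw}\widetilde{\mathcal{G}})$-exact if and only if it is $\mathrm{Hom}(-,\widetilde{\mathcal{G}})$-exact; (3) $S'$ is $\mathrm{Hom}(\mathrm{dw}\widetilde{\mathcal{F}},-)$-exact if and only if it is $\mathrm{Hom}(\widetilde{\mathcal{F}},-)$-exact; (4) $S'$ is $\mathrm{Hom}(-,\mathrm{dw}\widetilde{\mathcal{G}})$-exact if and only if it is $\mathrm{Hom}(-,\widetilde{\mathcal{G}})$-exact.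
   Context: $\mathrm{Ch}(\mathcal{C})$ is the category of chain complexes $X=(X_m,\partial^X_m)_{m\in\mathbb{Z}}$ over $\mathcal{C}$; $Z_m(X)=\ker\partial^X_m$. $D^m(C)$ has $C$ in degrees $m$ and $m-1$, zero elsewhere, with $\partial_m=\mathrm{id}_C$ and other differentials zero. For a class $\mathcal{F}$ of objects of $\mathcal{C}$: $\widetilde{\mathcal{F}}$ is the class of exact complexes $X$ with $Z_m(X)\in\mathcal{F}$ for all $m$, and $\mathrm{dw}\widetilde{\mathcal{F}}$ the class of complexes with $X_m\in\mathcal{F}$ for all $m$. $\mathcal{F}$ is closed under extensions if in any short exact sequence $0\to F'\to F\to F''\to0$ with $F',F''\in\mathcal{F}$ also $F\in\mathcal{F}$. For a class $\mathcal{H}$ of complexes, a sequence $S$ of complexes is $\mathrm{Hom}(\mathcal{H},-)$-exact (resp. $\mathrm{Hom}(-,\mathcal{H})$-exact) if $\mathrm{Hom}_{\mathrm{Ch}(\mathcal{C})}(H,S)$ (resp. $\mathrm{Hom}_{\mathrm{Ch}(\mathcal{C})}(S,H)$) is an exact sequence of Abelian groups for all $H\in\mathcal{H}$. *)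

theory Defs
  imports Main
begin

record ('o, 'm) abcat =
  Ob    :: "'o set"
  Hm    :: "'o \<Rightarrow> 'o \<Rightarrow> 'm set"
  cp    :: "'m \<Rightarrow> 'm \<Rightarrow> 'm"      (* cp g f = g \<circ> f *)
  ident :: "'o \<Rightarrow> 'm"
  ad    :: "'m \<Rightarrow> 'm \<Rightarrow> 'm"
  zr    :: "'o \<Rightarrow> 'o \<Rightarrow> 'm"
  ng    :: "'m \<Rightarrow> 'm"

definition is_category :: "('o,'m) abcat \<Rightarrow> bool" where
  "is_category C \<longleftrightarrow>
     (\<forall>A\<in>Ob C. ident C A \<in> Hm C A A) \<and>
     (\<forall>A\<in>Ob C. \<forall>B\<in>Ob C. \<forall>D\<in>Ob C. \<forall>f\<in>Hm C A B. \<forall>g\<in>Hm C B D.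
        cp C g f \<in> Hm C A D) \<and>
     (\<forall>A\<in>Ob C. \<forall>B\<in>Ob C. \<forall>D\<in>Ob C. \<forall>E\<in>Ob C. \<forall>f\<in>Hm C A B. \<forall>g\<in>Hm C B D. \<forall>h\<in>Hm C D E.
        cp C h (cp C g f) = cp C (cp C h g) f) \<and>
     (\<forall>A\<in>Ob C. \<forall>B\<in>Ob C. \<forall>f\<in>Hm C A B. cp C (ident C B) f = f \<and> cp C f (ident C A) = f)"

definition is_preadditive :: "('o,'m) abcat \<Rightarrow> bool" where
  "is_preadditive C \<longleftrightarrow>
     (\<forall>A\<in>Ob C. \<forall>B\<in>Ob C.
        zr C A B \<in> Hm C A B \<and>
        (\<forall>f\<in>Hm C A B. \<forall>g\<in>Hm C A B. ad C f g \<in> Hm C A B) \<and>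
        (\<forall>f\<in>Hm C A B. ng C f \<in> Hm C A B) \<and>
        (\<forall>f\<in>Hm C A B. \<forall>g\<in>Hm C A B. \<forall>h\<in>Hm C A B. ad C (ad C f g) h = ad C f (ad C g h)) \<and>
        (\<forall>f\<in>Hm C A B. \<forall>g\<in>Hm C A B. ad C f g = ad C g f) \<and>
        (\<forall>f\<in>Hm C A B. ad C f (zr C A B) = f) \<and>
        (\<forall>f\<in>Hm C A B. ad C f (ng C f) = zr C A B)) \<and>
     (\<forall>A\<in>Ob C. \<forall>B\<in>Ob C. \<forall>D\<in>Ob C. \<forall>f\<in>Hm C A B. \<forall>f'\<in>Hm C A B. \<forall>g\<in>Hm C B D. \<forall>g'\<in>Hm C B D.
        cp C g (ad C f f') = ad C (cp C g f) (cp C g f') \<and>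
        cp C (ad C g g') f = ad C (cp C g f) (cp C g' f))"

definition zero_object :: "('o,'m) abcat \<Rightarrow> 'o \<Rightarrow> bool" where
  "zero_object C Z \<longleftrightarrow> Z \<in> Ob C \<and>
     (\<forall>A\<in>Ob C. Hm C Z A = {zr C Z A} \<and> Hm C A Z = {zr C A Z})"

definition has_biproducts :: "('o,'m) abcat \<Rightarrow> bool" where
  "has_biproducts C \<longleftrightarrow> (\<forall>A\<in>Ob C. \<forall>B\<in>Ob C. \<exists>P i1 i2 p1 p2.
     P \<in> Ob C \<and> i1 \<in> Hm C A P \<and> i2 \<in> Hm C B P \<and> p1 \<in> Hm C P A \<and> p2 \<in> Hm C P B \<and>
     cp C p1 i1 = ident C A \<and> cp C p2 i2 = ident C B \<and>
     cp C p2 i1 = zr C A B \<and> cp C p1 i2 = zr C B A \<and>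
     ad C (cp C i1 p1) (cp C i2 p2) = ident C P)"

definition is_kernel :: "('o,'m) abcat \<Rightarrow> 'o \<Rightarrow> 'o \<Rightarrow> 'm \<Rightarrow> 'o \<Rightarrow> 'm \<Rightarrow> bool" where
  "is_kernel C A B f K k \<longleftrightarrow> K \<in> Ob C \<and> k \<in> Hm C K A \<and> cp C f k = zr C K B \<and>
     (\<forall>X\<in>Ob C. \<forall>h\<in>Hm C X A. cp C f h = zr C X B \<longrightarrow>
        (\<exists>!u. u \<in> Hm C X K \<and> cp C k u = h))"

definition is_cokernel :: "('o,'m) abcat \<Rightarrow> 'o \<Rightarrow> 'o \<Rightarrow> 'm \<Rightarrow> 'o \<Rightarrow> 'm \<Rightarrow> bool" where
  "is_cokernel C A B f Q q \<longleftrightarrow> Q \<in> Ob C \<and> q \<in> Hm C B Q \<and> cp C q f = zr C A Q \<and>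
     (\<forall>X\<in>Ob C. \<forall>h\<in>Hm C B X. cp C h f = zr C A X \<longrightarrow>
        (\<exists>!u. u \<in> Hm C Q X \<and> cp C u q = h))"

definition is_mono :: "('o,'m) abcat \<Rightarrow> 'o \<Rightarrow> 'o \<Rightarrow> 'm \<Rightarrow> bool" where
  "is_mono C A B f \<longleftrightarrow> f \<in> Hm C A B \<and>
     (\<forall>X\<in>Ob C. \<forall>g\<in>Hm C X A. \<forall>h\<in>Hm C X A. cp C f g = cp C f h \<longrightarrow> g = h)"

definition is_epi :: "('o,'m) abcat \<Rightarrow> 'o \<Rightarrow> 'o \<Rightarrow> 'm \<Rightarrow> bool" where
  "is_epi C A B f \<longleftrightarrow> f \<in> Hm C A B \<and>
     (\<forall>X\<in>Ob C. \<forall>g\<in>Hm C B X. \<forall>h\<in>Hm C B X. cp C g f = cp C h f \<longrightarrow> g = h)"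

definition abelian :: "('o,'m) abcat \<Rightarrow> bool" where
  "abelian C \<longleftrightarrow> is_category C \<and> is_preadditive C \<and> (\<exists>Z. zero_object C Z) \<and>
     has_biproducts C \<and>
     (\<forall>A\<in>Ob C. \<forall>B\<in>Ob C. \<forall>f\<in>Hm C A B. \<exists>K k. is_kernel C A B f K k) \<and>
     (\<forall>A\<in>Ob C. \<forall>B\<in>Ob C. \<forall>f\<in>Hm C A B. \<exists>Q q. is_cokernel C A B f Q q) \<and>
     (\<forall>A\<in>Ob C. \<forall>B\<in>Ob C. \<forall>f\<in>Hm C A B. is_mono C A B f \<longrightarrow>
        (\<exists>D g. D \<in> Ob C \<and> g \<in> Hm C B D \<and> is_kernel C B D g A f)) \<and>
     (\<forall>A\<in>Ob C. \<forall>B\<in>Ob C. \<forall>f\<in>Hm C A B. is_epi C A B f \<longrightarrow>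
        (\<exists>D h. D \<in> Ob C \<and> h \<in> Hm C D A \<and> is_cokernel C D A h B f))"

definition short_exact :: "('o,'m) abcat \<Rightarrow> 'o \<Rightarrow> 'o \<Rightarrow> 'o \<Rightarrow> 'm \<Rightarrow> 'm \<Rightarrow> bool" where
  "short_exact C A B D f g \<longleftrightarrow> B \<in> Ob C \<and> f \<in> Hm C A B \<and> g \<in> Hm C B D \<and>
     is_kernel C B D g A f \<and> is_cokernel C A B f D g"

text \<open>Exactness of A \<rightarrow> B \<rightarrow> D at B (ker g \<subseteq> im f, element-free form)\<close>
definition exact_at :: "('o,'m) abcat \<Rightarrow> 'o \<Rightarrow> 'o \<Rightarrow> 'o \<Rightarrow> 'm \<Rightarrow> 'm \<Rightarrow> bool" where
  "exact_at C A B D f g \<longleftrightarrow> f \<in> Hm C A B \<and> g \<in> Hm C B D \<and> cp C g f = zr C A D \<and>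
     (\<forall>X\<in>Ob C. \<forall>h\<in>Hm C X B. cp C g h = zr C X D \<longrightarrow>
        (\<forall>Y\<in>Ob C. \<forall>c\<in>Hm C B Y. cp C c f = zr C A Y \<longrightarrow> cp C c h = zr C X Y))"

definition closed_ext :: "('o,'m) abcat \<Rightarrow> 'o set \<Rightarrow> bool" where
  "closed_ext C \<F> \<longleftrightarrow> (\<forall>A B D f g. A \<in> \<F> \<longrightarrow> D \<in> \<F> \<longrightarrow> short_exact C A B D f g \<longrightarrow> B \<in> \<F>)"

text \<open>A complex is a pair (objects X_n, differentials d_n : X_n \<rightarrow> X_(n-1)).\<close>
type_synonym ('o, 'm) cx = "(int \<Rightarrow> 'o) \<times> (int \<Rightarrow> 'm)"

definition is_complex :: "('o,'m) abcat \<Rightarrow> ('o,'m) cx \<Rightarrow> bool" where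
  "is_complex C X \<longleftrightarrow> (\<forall>n. fst X n \<in> Ob C \<and> snd X n \<in> Hm C (fst X n) (fst X (n - 1)) \<and>
     cp C (snd X (n - 1)) (snd X n) = zr C (fst X n) (fst X (n - 2)))"

definition chain_map :: "('o,'m) abcat \<Rightarrow> ('o,'m) cx \<Rightarrow> ('o,'m) cx \<Rightarrow> (int \<Rightarrow> 'm) \<Rightarrow> bool" where
  "chain_map C X Y f \<longleftrightarrow> (\<forall>n. f n \<in> Hm C (fst X n) (fst Y n) \<and>
     cp C (snd Y n) (f n) = cp C (f (n - 1)) (snd X n))"

definition chom :: "('o,'m) abcat \<Rightarrow> ('o,'m) cx \<Rightarrow> ('o,'m) cx \<Rightarrow> (int \<Rightarrow> 'm) set" where
  "chom C X Y = {f. chain_map C X Y f}"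

definition czero :: "('o,'m) abcat \<Rightarrow> ('o,'m) cx \<Rightarrow> ('o,'m) cx \<Rightarrow> int \<Rightarrow> 'm" where
  "czero C X Y = (\<lambda>n. zr C (fst X n) (fst Y n))"

definition ccomp :: "('o,'m) abcat \<Rightarrow> (int \<Rightarrow> 'm) \<Rightarrow> (int \<Rightarrow> 'm) \<Rightarrow> int \<Rightarrow> 'm" where
  "ccomp C g f = (\<lambda>n. cp C (g n) (f n))"

text \<open>Short exact sequences in Ch(C): degreewise short exact (kernels/cokernels in Ch(C)
  are computed degreewise).\<close>
definition ses_ch :: "('o,'m) abcat \<Rightarrow> ('o,'m) cx \<Rightarrow> ('o,'m) cx \<Rightarrow> ('o,'m) cx \<Rightarrow>
    (int \<Rightarrow> 'm) \<Rightarrow> (int \<Rightarrow> 'm) \<Rightarrow> bool" where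
  "ses_ch C A B D f g \<longleftrightarrow> is_complex C A \<and> is_complex C B \<and> is_complex C D \<and>
     chain_map C A B f \<and> chain_map C B D g \<and>
     (\<forall>n. short_exact C (fst A n) (fst B n) (fst D n) (f n) (g n))"

text \<open>Hom(H, S) exact for S = 0 \<rightarrow> A \<rightarrow> B \<rightarrow> D \<rightarrow> 0:
  0 \<rightarrow> Hom(H,A) \<rightarrow> Hom(H,B) \<rightarrow> Hom(H,D) \<rightarrow> 0 exact as abelian groups.\<close>
definition hom_exact_cov :: "('o,'m) abcat \<Rightarrow> ('o,'m) cx \<Rightarrow> ('o,'m) cx \<Rightarrow> ('o,'m) cx \<Rightarrow>
    ('o,'m) cx \<Rightarrow> (int \<Rightarrow> 'm) \<Rightarrow> (int \<Rightarrow> 'm) \<Rightarrow> bool" where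
  "hom_exact_cov C H A B D f g \<longleftrightarrow>
     {u \<in> chom C H A. ccomp C f u = czero C H B} = {czero C H A} \<and>
     {v \<in> chom C H B. ccomp C g v = czero C H D} = (\<lambda>u. ccomp C f u) ` chom C H A \<and>
     (\<lambda>v. ccomp C g v) ` chom C H B = chom C H D"

text \<open>Hom(S, H) exact: 0 \<rightarrow> Hom(D,H) \<rightarrow> Hom(B,H) \<rightarrow> Hom(A,H) \<rightarrow> 0 exact.\<close>
definition hom_exact_contra :: "('o,'m) abcat \<Rightarrow> ('o,'m) cx \<Rightarrow> ('o,'m) cx \<Rightarrow> ('o,'m) cx \<Rightarrow>
    ('o,'m) cx \<Rightarrow> (int \<Rightarrow> 'm) \<Rightarrow> (int \<Rightarrow> 'm) \<Rightarrow> bool" where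
  "hom_exact_contra C H A B D f g \<longleftrightarrow>
     {u \<in> chom C D H. ccomp C u g = czero C B H} = {czero C D H} \<and>
     {v \<in> chom C B H. ccomp C v f = czero C A H} = (\<lambda>u. ccomp C u g) ` chom C D H \<and>
     (\<lambda>v. ccomp C v f) ` chom C B H = chom C A H"

definition Hom_cov_exact :: "('o,'m) abcat \<Rightarrow> ('o,'m) cx set \<Rightarrow> ('o,'m) cx \<Rightarrow> ('o,'m) cx \<Rightarrow>
    ('o,'m) cx \<Rightarrow> (int \<Rightarrow> 'm) \<Rightarrow> (int \<Rightarrow> 'm) \<Rightarrow> bool" where
  "Hom_cov_exact C \<H> A B D f g \<longleftrightarrow> (\<forall>H\<in>\<H>. hom_exact_cov C H A B D f g)"

definition Hom_contra_exact :: "('o,'m) abcat \<Rightarrow> ('o,'m) cx set \<Rightarrow> ('o,'m) cx \<Rightarrow> ('o,'m) cx \<Rightarrow>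
    ('o,'m) cx \<Rightarrow> (int \<Rightarrow> 'm) \<Rightarrow> (int \<Rightarrow> 'm) \<Rightarrow> bool" where
  "Hom_contra_exact C \<H> A B D f g \<longleftrightarrow> (\<forall>H\<in>\<H>. hom_exact_contra C H A B D f g)"

definition exact_complex :: "('o,'m) abcat \<Rightarrow> ('o,'m) cx \<Rightarrow> bool" where
  "exact_complex C X \<longleftrightarrow> (\<forall>n. exact_at C (fst X (n + 1)) (fst X n) (fst X (n - 1))
                                    (snd X (n + 1)) (snd X n))"

text \<open>Z_n(X) \<in> \<F>: a kernel of d_n lies in \<F>.\<close>
definition tilde :: "('o,'m) abcat \<Rightarrow> 'o set \<Rightarrow> ('o,'m) cx set" where
  "tilde C \<F> = {X. is_complex C X \<and> exact_complex C X \<and>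
     (\<forall>n. \<exists>K k. is_kernel C (fst X n) (fst X (n - 1)) (snd X n) K k \<and> K \<in> \<F>)}"

definition dwtilde :: "('o,'m) abcat \<Rightarrow> 'o set \<Rightarrow> ('o,'m) cx set" where
  "dwtilde C \<F> = {X. is_complex C X \<and> (\<forall>n. fst X n \<in> \<F>)}"

definition zobj :: "('o,'m) abcat \<Rightarrow> 'o" where
  "zobj C = (SOME Z. zero_object C Z)"

definition disk :: "('o,'m) abcat \<Rightarrow> int \<Rightarrow> 'o \<Rightarrow> ('o,'m) cx" where
  "disk C m c =
     (let X = (\<lambda>n. if n = m \<or> n = m - 1 then c else zobj C)
      in (X, \<lambda>n. if n = m then ident C c else zr C (X n) (X (n - 1))))"

end

theory Submission
  imports Defs
begin

(* Hom(H, -) and Hom(-, H) are left exact on a short exact sequence of complexes, so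
   Hom-exactness means surjectivity of g_* (resp. f^* ).  Since F is closed under extensions,
   an exact complex with cycles in F has components in F (use 0 -> Z_n -> X_n -> Z_{n-1} -> 0),
   so F~ is contained in dwF~ and one implication is trivial.  For the other one, every A in F
   gives a test complex in F~: A (+) A in each degree with differential i2 p1.  Mapping it to
   (or from) a complex by a null-homotopic map d h + h d shows that the F~-hypothesis lets
   single morphisms between A and the components of Z lift (extend) degreewise.  Because one
   end of each sequence is a disk, such degreewise data assemble into chain maps: at the free
   end of the disk a null-homotopic map suffices; at the glued end one corrects the degreewise
   lift in one degree and checks the remaining squares by a joint mono/epi argument. *)

section \<open>Preliminaries on abelian categories\<close>

locale abelian_category =
  fixes C :: "('o,'m) abcat"
  assumes abel: "abelian C"
begin

lemma cat: "is_category C" and pre: "is_preadditive C"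
  using abel unfolding abelian_def by auto

lemma idT: "A \<in> Ob C \<Longrightarrow> ident C A \<in> Hm C A A"
  using cat unfolding is_category_def by auto

lemma cpT: "\<lbrakk>A\<in>Ob C; B\<in>Ob C; D\<in>Ob C; f \<in> Hm C A B; g \<in> Hm C B D\<rbrakk> \<Longrightarrow> cp C g f \<in> Hm C A D"
  using cat unfolding is_category_def by blast

lemma assoc: "\<lbrakk>A\<in>Ob C; B\<in>Ob C; D\<in>Ob C; E\<in>Ob C; f \<in> Hm C A B; g \<in> Hm C B D; h \<in> Hm C D E\<rbrakk>
   \<Longrightarrow> cp C h (cp C g f) = cp C (cp C h g) f"
  using cat unfolding is_category_def by blast

lemma idL: "\<lbrakk>A\<in>Ob C; B\<in>Ob C; f \<in> Hm C A B\<rbrakk> \<Longrightarrow> cp C (ident C B) f = f"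
  using cat unfolding is_category_def by blast

lemma idR: "\<lbrakk>A\<in>Ob C; B\<in>Ob C; f \<in> Hm C A B\<rbrakk> \<Longrightarrow> cp C f (ident C A) = f"
  using cat unfolding is_category_def by blast

lemma zrT: "\<lbrakk>A\<in>Ob C; B\<in>Ob C\<rbrakk> \<Longrightarrow> zr C A B \<in> Hm C A B"
  using pre unfolding is_preadditive_def by blast

lemma adT: "\<lbrakk>A\<in>Ob C; B\<in>Ob C; f \<in> Hm C A B; g \<in> Hm C A B\<rbrakk> \<Longrightarrow> ad C f g \<in> Hm C A B"
  using pre unfolding is_preadditive_def by blast

lemma ngT: "\<lbrakk>A\<in>Ob C; B\<in>Ob C; f \<in> Hm C A B\<rbrakk> \<Longrightarrow> ng C f \<in> Hm C A B"
  using pre unfolding is_preadditive_def by blast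

lemma ad_assoc: "\<lbrakk>A\<in>Ob C; B\<in>Ob C; f \<in> Hm C A B; g \<in> Hm C A B; h \<in> Hm C A B\<rbrakk>
   \<Longrightarrow> ad C (ad C f g) h = ad C f (ad C g h)"
  using pre unfolding is_preadditive_def by blast

lemma ad_comm: "\<lbrakk>A\<in>Ob C; B\<in>Ob C; f \<in> Hm C A B; g \<in> Hm C A B\<rbrakk> \<Longrightarrow> ad C f g = ad C g f"
  using pre unfolding is_preadditive_def by blast

lemma ad_zr: "\<lbrakk>A\<in>Ob C; B\<in>Ob C; f \<in> Hm C A B\<rbrakk> \<Longrightarrow> ad C f (zr C A B) = f"
  using pre unfolding is_preadditive_def by blast

lemma zr_ad: "\<lbrakk>A\<in>Ob C; B\<in>Ob C; f \<in> Hm C A B\<rbrakk> \<Longrightarrow> ad C (zr C A B) f = f"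
  using ad_zr ad_comm zrT by metis

lemma ad_ng: "\<lbrakk>A\<in>Ob C; B\<in>Ob C; f \<in> Hm C A B\<rbrakk> \<Longrightarrow> ad C f (ng C f) = zr C A B"
  using pre unfolding is_preadditive_def by blast

lemma distL: "\<lbrakk>A\<in>Ob C; B\<in>Ob C; D\<in>Ob C; f \<in> Hm C A B; f' \<in> Hm C A B; g \<in> Hm C B D\<rbrakk>
   \<Longrightarrow> cp C g (ad C f f') = ad C (cp C g f) (cp C g f')"
  using pre unfolding is_preadditive_def by blast

lemma distR: "\<lbrakk>A\<in>Ob C; B\<in>Ob C; D\<in>Ob C; f \<in> Hm C A B; g \<in> Hm C B D; g' \<in> Hm C B D\<rbrakk>
   \<Longrightarrow> cp C (ad C g g') f = ad C (cp C g f) (cp C g' f)"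
  using pre unfolding is_preadditive_def by blast

lemma ad_cancel:
  assumes "A\<in>Ob C" "B\<in>Ob C" "x \<in> Hm C A B" "y \<in> Hm C A B" "z \<in> Hm C A B" "ad C x y = ad C x z"
  shows "y = z"
proof -
  have n: "ng C x \<in> Hm C A B" using assms ngT by blast
  have e: "ad C (ng C x) x = zr C A B" using assms ad_ng ad_comm n by metis
  have "y = ad C (ad C (ng C x) x) y" using e assms zr_ad by simp
  also have "\<dots> = ad C (ng C x) (ad C x y)" using ad_assoc assms n by blast
  also have "\<dots> = ad C (ad C (ng C x) x) z" using ad_assoc assms n by simp
  also have "\<dots> = z" using e assms zr_ad by simp
  finally show ?thesis .
qed

lemma zero_double: "\<lbrakk>A\<in>Ob C; B\<in>Ob C; y \<in> Hm C A B; ad C y y = y\<rbrakk> \<Longrightarrow> y = zr C A B"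
  using ad_cancel[of A B y y "zr C A B"] ad_zr zrT by metis

text \<open>Composition with a zero morphism is zero, being its own double.\<close>
lemma zr_right:
  assumes "A\<in>Ob C" "B\<in>Ob C" "D\<in>Ob C" "g \<in> Hm C B D"
  shows "cp C g (zr C A B) = zr C A D"
proof -
  have z: "zr C A B \<in> Hm C A B" using assms zrT by blast
  have "cp C g (zr C A B) = cp C g (ad C (zr C A B) (zr C A B))" using ad_zr assms z by simp
  also have "\<dots> = ad C (cp C g (zr C A B)) (cp C g (zr C A B))" using distL assms z by blast
  finally show ?thesis using zero_double[of A D "cp C g (zr C A B)"] assms z cpT by metis
qed

lemma zr_left:
  assumes "A\<in>Ob C" "B\<in>Ob C" "D\<in>Ob C" "f \<in> Hm C A B"
  shows "cp C (zr C B D) f = zr C A D"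
proof -
  have z: "zr C B D \<in> Hm C B D" using assms zrT by blast
  have "cp C (zr C B D) f = cp C (ad C (zr C B D) (zr C B D)) f" using ad_zr assms z by simp
  also have "\<dots> = ad C (cp C (zr C B D) f) (cp C (zr C B D) f)" using distR assms z by blast
  finally show ?thesis using zero_double[of A D "cp C (zr C B D) f"] assms z cpT by metis
qed

lemma cp_ngR:
  assumes "A\<in>Ob C" "B\<in>Ob C" "D\<in>Ob C" "f \<in> Hm C A B" "g \<in> Hm C B D"
  shows "cp C g (ng C f) = ng C (cp C g f)"
proof -
  have gf: "cp C g f \<in> Hm C A D" using assms cpT by blast
  have n: "ng C f \<in> Hm C A B" using assms ngT by blast
  have "ad C (cp C g f) (cp C g (ng C f)) = cp C g (ad C f (ng C f))" using distL assms n by metis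
  also have "\<dots> = ad C (cp C g f) (ng C (cp C g f))" using ad_ng zr_right gf assms by simp
  finally show ?thesis using ad_cancel assms gf cpT n ngT by metis
qed

lemma cp_ngL:
  assumes "A\<in>Ob C" "B\<in>Ob C" "D\<in>Ob C" "f \<in> Hm C A B" "g \<in> Hm C B D"
  shows "cp C (ng C g) f = ng C (cp C g f)"
proof -
  have gf: "cp C g f \<in> Hm C A D" using assms cpT by blast
  have n: "ng C g \<in> Hm C B D" using assms ngT by blast
  have "ad C (cp C g f) (cp C (ng C g) f) = cp C (ad C g (ng C g)) f" using distR assms n by metis
  also have "\<dots> = ad C (cp C g f) (ng C (cp C g f))" using ad_ng zr_left gf assms by simp
  finally show ?thesis using ad_cancel assms gf cpT n ngT by metis
qed

lemma ad_diff_cancel: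
  assumes "A\<in>Ob C" "B\<in>Ob C" "x \<in> Hm C A B" "y \<in> Hm C A B"
  shows "ad C (ad C x (ng C y)) y = x"
proof -
  have n: "ng C y \<in> Hm C A B" using assms ngT by blast
  have "ad C (ad C x (ng C y)) y = ad C x (ad C (ng C y) y)" using ad_assoc assms n by blast
  also have "\<dots> = x" using ad_comm[OF assms(1,2) n assms(4)] ad_ng ad_zr assms by simp
  finally show ?thesis .
qed

lemma ad_sub_cancel:
  assumes "A\<in>Ob C" "B\<in>Ob C" "x \<in> Hm C A B" "y \<in> Hm C A B"
  shows "ad C y (ad C x (ng C y)) = x"
proof -
  have n: "ng C y \<in> Hm C A B" using assms ngT by blast
  have "ad C y (ad C x (ng C y)) = ad C y (ad C (ng C y) x)" using ad_comm assms n by metis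
  also have "\<dots> = ad C (ad C y (ng C y)) x" using ad_assoc assms n by metis
  also have "\<dots> = x" using assms ad_ng zr_ad by simp
  finally show ?thesis .
qed

lemma diff_zero:
  assumes "A\<in>Ob C" "B\<in>Ob C" "x \<in> Hm C A B" "y \<in> Hm C A B" "ad C x (ng C y) = zr C A B"
  shows "x = y"
  using ad_diff_cancel[OF assms(1-4)] assms(5) zr_ad assms by simp

lemma diff_comp_zero: "\<lbrakk>A\<in>Ob C; B\<in>Ob C; D\<in>Ob C; x \<in> Hm C A B; y \<in> Hm C A B; g \<in> Hm C B D; cp C g x = cp C g y\<rbrakk>
  \<Longrightarrow> cp C g (ad C x (ng C y)) = zr C A D"
  by (simp add: distL ngT cp_ngR ad_ng cpT)

lemma diff_compR_zero: "\<lbrakk>A\<in>Ob C; B\<in>Ob C; D\<in>Ob C; x \<in> Hm C B D; y \<in> Hm C B D; f \<in> Hm C A B; cp C x f = cp C y f\<rbrakk>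
  \<Longrightarrow> cp C (ad C x (ng C y)) f = zr C A D"
  by (simp add: distR ngT cp_ngL ad_ng cpT)

end
context abelian_category begin

lemma ker_ex: "\<lbrakk>A\<in>Ob C; B\<in>Ob C; f\<in>Hm C A B\<rbrakk> \<Longrightarrow> \<exists>K k. is_kernel C A B f K k"
  using abel unfolding abelian_def by blast

lemma mono_is_kernel: "\<lbrakk>A\<in>Ob C; B\<in>Ob C; f\<in>Hm C A B; is_mono C A B f\<rbrakk>
   \<Longrightarrow> \<exists>D g. D \<in> Ob C \<and> g \<in> Hm C B D \<and> is_kernel C B D g A f"
  using abel unfolding abelian_def by blast

lemma epi_is_cokernel: "\<lbrakk>A\<in>Ob C; B\<in>Ob C; f\<in>Hm C A B; is_epi C A B f\<rbrakk>
   \<Longrightarrow> \<exists>D h. D \<in> Ob C \<and> h \<in> Hm C D A \<and> is_cokernel C D A h B f"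
  using abel unfolding abelian_def by blast

lemma kerD: "is_kernel C A B f K k \<Longrightarrow> K \<in> Ob C \<and> k \<in> Hm C K A \<and> cp C f k = zr C K B"
  unfolding is_kernel_def by blast

lemma kernel_factor: "\<lbrakk>is_kernel C B D g A f; X\<in>Ob C; h \<in> Hm C X B; cp C g h = zr C X D\<rbrakk>
   \<Longrightarrow> \<exists>u\<in>Hm C X A. cp C f u = h"
  unfolding is_kernel_def by blast

lemma cokernel_factor: "\<lbrakk>is_cokernel C A B f D g; X\<in>Ob C; h \<in> Hm C B X; cp C h f = zr C A X\<rbrakk>
   \<Longrightarrow> \<exists>u\<in>Hm C D X. cp C u g = h"
  unfolding is_cokernel_def by blast

lemma monoD: "\<lbrakk>is_mono C A B f; X\<in>Ob C; x \<in> Hm C X A; y \<in> Hm C X A; cp C f x = cp C f y\<rbrakk> \<Longrightarrow> x = y"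
  unfolding is_mono_def by blast

lemma epiD: "\<lbrakk>is_epi C B D g; X\<in>Ob C; x \<in> Hm C D X; y \<in> Hm C D X; cp C x g = cp C y g\<rbrakk> \<Longrightarrow> x = y"
  unfolding is_epi_def by blast

lemma kernel_mono:
  assumes k: "is_kernel C B D g A f" and o: "B\<in>Ob C" "D\<in>Ob C" "g \<in> Hm C B D"
  shows "is_mono C A B f"
  unfolding is_mono_def
proof (intro conjI ballI impI)
  have A: "A \<in> Ob C" and f: "f \<in> Hm C A B" and gf: "cp C g f = zr C A D" using kerD[OF k] by auto
  then show "f \<in> Hm C A B" by blast
  fix X x y assume X: "X\<in>Ob C" and x: "x \<in> Hm C X A" and y: "y \<in> Hm C X A" and e: "cp C f x = cp C f y"
  have "cp C g (cp C f x) = zr C X D" using assoc[OF X A o(1) o(2) x f o(3)] gf zr_left X A o x by simp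
  moreover have "cp C f x \<in> Hm C X B" using cpT X A o f x by blast
  ultimately have "\<exists>!u. u \<in> Hm C X A \<and> cp C f u = cp C f x" using k X unfolding is_kernel_def by blast
  then show "x = y" using x y e by metis
qed

lemma cokernel_epi:
  assumes k: "is_cokernel C A B f D g" and o: "A\<in>Ob C" "B\<in>Ob C" "f \<in> Hm C A B"
  shows "is_epi C B D g"
  unfolding is_epi_def
proof (intro conjI ballI impI)
  have D: "D \<in> Ob C" and g: "g \<in> Hm C B D" and gf: "cp C g f = zr C A D"
    using k unfolding is_cokernel_def by auto
  then show "g \<in> Hm C B D" by blast
  fix X x y assume X: "X\<in>Ob C" and x: "x \<in> Hm C D X" and y: "y \<in> Hm C D X" and e: "cp C x g = cp C y g"
  have "cp C (cp C x g) f = zr C A X" using assoc[OF o(1) o(2) D X o(3) g x] gf zr_right X D o x by simp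
  moreover have "cp C x g \<in> Hm C B X" using cpT X D o g x by blast
  ultimately have "\<exists>!u. u \<in> Hm C D X \<and> cp C u g = cp C x g" using k X unfolding is_cokernel_def by blast
  then show "x = y" using x y e by metis
qed

lemma mono_comp:
  assumes o: "A\<in>Ob C" "B\<in>Ob C" "D\<in>Ob C" and m1: "is_mono C B D k" and m2: "is_mono C A B q"
  shows "is_mono C A D (cp C k q)"
  unfolding is_mono_def
proof (intro conjI ballI impI)
  have k: "k \<in> Hm C B D" and q: "q \<in> Hm C A B" using m1 m2 unfolding is_mono_def by auto
  then show "cp C k q \<in> Hm C A D" using cpT o by blast
  fix X x y assume X: "X \<in> Ob C" and x: "x \<in> Hm C X A" and y: "y \<in> Hm C X A"
    and e: "cp C (cp C k q) x = cp C (cp C k q) y"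
  have "cp C k (cp C q x) = cp C k (cp C q y)" using e assoc[OF X o x q k] assoc[OF X o y q k] by simp
  then have "cp C q x = cp C q y" using monoD[OF m1 X] cpT X o x y q by blast
  then show "x = y" using monoD[OF m2 X x y] by blast
qed

lemma zobj: "zero_object C (zobj C)"
proof -
  have "\<exists>Z. zero_object C Z" using abel unfolding abelian_def by blast
  then show ?thesis unfolding zobj_def by (rule someI_ex)
qed

lemma zobjOb: "zobj C \<in> Ob C"
  using zobj unfolding zero_object_def by blast

lemma zobj_from: "A \<in> Ob C \<Longrightarrow> Hm C (zobj C) A = {zr C (zobj C) A}"
  using zobj unfolding zero_object_def by blast

lemma zobj_to: "A \<in> Ob C \<Longrightarrow> Hm C A (zobj C) = {zr C A (zobj C)}"
  using zobj unfolding zero_object_def by blast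

lemma mono_from_zobj: "\<lbrakk>E \<in> Ob C; h \<in> Hm C (zobj C) E\<rbrakk> \<Longrightarrow> is_mono C (zobj C) E h"
  unfolding is_mono_def by (auto simp: zobj_to)

lemma epi_to_zobj: "\<lbrakk>E \<in> Ob C; h \<in> Hm C E (zobj C)\<rbrakk> \<Longrightarrow> is_epi C E (zobj C) h"
  unfolding is_epi_def by (auto simp: zobj_from)

lemma ses_objs: "short_exact C A B D f g
   \<Longrightarrow> A \<in> Ob C \<and> B \<in> Ob C \<and> D \<in> Ob C \<and> f \<in> Hm C A B \<and> g \<in> Hm C B D"
  unfolding short_exact_def is_kernel_def is_cokernel_def by blast

lemma ses_gf: "short_exact C A B D f g \<Longrightarrow> cp C g f = zr C A D"
  unfolding short_exact_def is_kernel_def by blast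

lemma ses_mono: "short_exact C A B D f g \<Longrightarrow> is_mono C A B f"
  using kernel_mono ses_objs unfolding short_exact_def by blast

lemma ses_epi: "short_exact C A B D f g \<Longrightarrow> is_epi C B D g"
  using cokernel_epi ses_objs unfolding short_exact_def by blast

text \<open>If \<open>f\<close> is a kernel of \<open>g\<close> and \<open>r \<circ> f\<close> is mono, then \<open>g\<close> and \<open>r\<close> are jointly mono:
  the difference of two morphisms equalised by \<open>g\<close> factors through \<open>f\<close>, and \<open>r\<close> detects it.\<close>
lemma kernel_jointly_mono:
  assumes k: "is_kernel C B D g A f" and o: "B\<in>Ob C" "D\<in>Ob C" "E\<in>Ob C" "W\<in>Ob C"
    and rT: "r \<in> Hm C B E" and rm: "is_mono C A E (cp C r f)"
    and gT: "g \<in> Hm C B D" and x: "x \<in> Hm C W B" and y: "y \<in> Hm C W B"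
    and gxy: "cp C g x = cp C g y" and rxy: "cp C r x = cp C r y"
  shows "x = y"
proof -
  have A: "A \<in> Ob C" and fT: "f \<in> Hm C A B" using kerD[OF k] by auto
  define \<delta> where "\<delta> = ad C x (ng C y)"
  have \<delta>T: "\<delta> \<in> Hm C W B" unfolding \<delta>_def using adT ngT o x y by blast
  have g\<delta>: "cp C g \<delta> = zr C W D" unfolding \<delta>_def using diff_comp_zero[OF o(4,1,2) x y gT gxy] .
  obtain \<epsilon> where \<epsilon>T: "\<epsilon> \<in> Hm C W A" and f\<epsilon>: "cp C f \<epsilon> = \<delta>"
    using kernel_factor[OF k o(4) \<delta>T g\<delta>] by blast
  have "cp C (cp C r f) \<epsilon> = cp C r \<delta>" using assoc[OF o(4) A o(1,3) \<epsilon>T fT rT] f\<epsilon> by simp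
  also have "\<dots> = zr C W E" unfolding \<delta>_def using diff_comp_zero[OF o(4,1,3) x y rT rxy] .
  also have "\<dots> = cp C (cp C r f) (zr C W A)" using zr_right[OF o(4) A o(3)] cpT[OF A o(1,3) fT rT] by simp
  finally have "\<epsilon> = zr C W A" using monoD[OF rm o(4) \<epsilon>T zrT[OF o(4) A]] by blast
  then have "\<delta> = zr C W B" using f\<epsilon> zr_right[OF o(4) A o(1) fT] by simp
  then show ?thesis using diff_zero[OF o(4,1) x y] unfolding \<delta>_def by blast
qed

lemma cokernel_jointly_epi:
  assumes k: "is_cokernel C A B f D g" and o: "A\<in>Ob C" "B\<in>Ob C" "E\<in>Ob C" "W\<in>Ob C"
    and rT: "r \<in> Hm C E B" and re: "is_epi C E D (cp C g r)"
    and fT: "f \<in> Hm C A B" and x: "x \<in> Hm C B W" and y: "y \<in> Hm C B W"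
    and fxy: "cp C x f = cp C y f" and rxy: "cp C x r = cp C y r"
  shows "x = y"
proof -
  have D: "D \<in> Ob C" and gT: "g \<in> Hm C B D" using k unfolding is_cokernel_def by auto
  define \<delta> where "\<delta> = ad C x (ng C y)"
  have \<delta>T: "\<delta> \<in> Hm C B W" unfolding \<delta>_def using adT ngT o x y by blast
  have f\<delta>: "cp C \<delta> f = zr C A W" unfolding \<delta>_def using diff_compR_zero[OF o(1,2,4) x y fT fxy] .
  obtain \<epsilon> where \<epsilon>T: "\<epsilon> \<in> Hm C D W" and \<epsilon>g: "cp C \<epsilon> g = \<delta>"
    using cokernel_factor[OF k o(4) \<delta>T f\<delta>] by blast
  have "cp C \<epsilon> (cp C g r) = cp C \<delta> r" using assoc[OF o(3,2) D o(4) rT gT \<epsilon>T] \<epsilon>g by simp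
  also have "\<dots> = zr C E W" unfolding \<delta>_def using diff_compR_zero[OF o(3,2,4) x y rT rxy] .
  also have "\<dots> = cp C (zr C D W) (cp C g r)" using zr_left[OF o(3) D o(4)] cpT[OF o(3,2) D rT gT] by simp
  finally have "\<epsilon> = zr C D W" using epiD[OF re o(4) \<epsilon>T zrT[OF D o(4)]] by blast
  then have "\<delta> = zr C B W" using \<epsilon>g zr_left[OF o(2) D o(4) gT] by simp
  then show ?thesis using diff_zero[OF o(2,4) x y] unfolding \<delta>_def by blast
qed

lemma ses_zero_kernel_cancel:
  assumes s: "short_exact C (zobj C) B D f g" and W: "W \<in> Ob C"
    and x: "x \<in> Hm C W B" and y: "y \<in> Hm C W B" and gxy: "cp C g x = cp C g y"
  shows "x = y"
proof -
  have o: "B \<in> Ob C" "D \<in> Ob C" "f \<in> Hm C (zobj C) B" "g \<in> Hm C B D" using ses_objs[OF s] by auto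
  have z: "zr C B B \<in> Hm C B B" using zrT o by blast
  have "is_mono C (zobj C) B (cp C (zr C B B) f)" using mono_from_zobj o cpT zobjOb z by blast
  moreover have "cp C (zr C B B) x = cp C (zr C B B) y" using zr_left[OF W o(1) o(1)] x y by simp
  ultimately show ?thesis
    using kernel_jointly_mono[of B D g "zobj C" f B W "zr C B B"] s o W x y gxy z
    unfolding short_exact_def by blast
qed

lemma ses_zero_cokernel_cancel:
  assumes s: "short_exact C A B (zobj C) f g" and W: "W \<in> Ob C"
    and x: "x \<in> Hm C B W" and y: "y \<in> Hm C B W" and fxy: "cp C x f = cp C y f"
  shows "x = y"
proof -
  have o: "A \<in> Ob C" "B \<in> Ob C" "f \<in> Hm C A B" "g \<in> Hm C B (zobj C)" using ses_objs[OF s] by auto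
  have z: "zr C B B \<in> Hm C B B" using zrT o by blast
  have "is_epi C B (zobj C) (cp C g (zr C B B))" using epi_to_zobj o cpT zobjOb z by blast
  moreover have "cp C x (zr C B B) = cp C y (zr C B B)" using zr_right[OF o(2) o(2) W] x y by simp
  ultimately show ?thesis
    using cokernel_jointly_epi[of A B f "zobj C" g B W "zr C B B"] s o W x y fxy z
    unfolding short_exact_def by blast
qed

end
text \<open>The chain map \<open>d h + h d\<close> induced by a single morphism \<open>h : W\<^sub>j \<rightarrow> V\<^sub>j\<^sub>+\<^sub>1\<close>;
  it is concentrated in degrees \<open>j + 1\<close> and \<open>j\<close>.\<close>
definition boundary_map :: "('o,'m) abcat \<Rightarrow> ('o,'m) cx \<Rightarrow> ('o,'m) cx \<Rightarrow> int \<Rightarrow> 'm \<Rightarrow> int \<Rightarrow> 'm" where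
  "boundary_map C W V j h =
     (\<lambda>n. if n = j + 1 then cp C h (snd W (j + 1))
          else if n = j then cp C (snd V (j + 1)) h
          else zr C (fst W n) (fst V n))"

context abelian_category begin

lemma cxOb: "is_complex C X \<Longrightarrow> fst X n \<in> Ob C"
  unfolding is_complex_def by blast

lemma cxd: "is_complex C X \<Longrightarrow> snd X n \<in> Hm C (fst X n) (fst X (n - 1))"
  unfolding is_complex_def by blast

lemma cxd_succ: "is_complex C X \<Longrightarrow> snd X (n + 1) \<in> Hm C (fst X (n + 1)) (fst X n)"
  using cxd[of X "n + 1"] by simp

lemma cxdd: "is_complex C X \<Longrightarrow> cp C (snd X (n - 1)) (snd X n) = zr C (fst X n) (fst X (n - 2))"
  unfolding is_complex_def by blast

lemma cxdd_succ: "is_complex C X \<Longrightarrow> cp C (snd X n) (snd X (n + 1)) = zr C (fst X (n + 1)) (fst X (n - 1))"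
  using cxdd[of X "n + 1"] by simp

lemma cmT: "chain_map C X Y f \<Longrightarrow> f n \<in> Hm C (fst X n) (fst Y n)"
  unfolding chain_map_def by blast

lemma cmC: "chain_map C X Y f \<Longrightarrow> cp C (snd Y n) (f n) = cp C (f (n - 1)) (snd X n)"
  unfolding chain_map_def by blast

lemma chain_comp:
  assumes X: "is_complex C X" and Y: "is_complex C Y" and W: "is_complex C W"
    and f: "chain_map C X Y f" and g: "chain_map C Y W g"
  shows "chain_map C X W (ccomp C g f)"
  unfolding chain_map_def ccomp_def
proof (intro allI conjI)
  fix n
  note o = cxOb[OF X] cxOb[OF Y] cxOb[OF W]
  show "cp C (g n) (f n) \<in> Hm C (fst X n) (fst W n)" using cpT o cmT f g by blast
  have "cp C (snd W n) (cp C (g n) (f n)) = cp C (cp C (snd W n) (g n)) (f n)"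
    using assoc o cmT f g cxd W by blast
  also have "\<dots> = cp C (cp C (g (n-1)) (snd Y n)) (f n)" using cmC g by simp
  also have "\<dots> = cp C (g (n-1)) (cp C (snd Y n) (f n))"
    using assoc o cmT f g cxd Y by metis
  also have "\<dots> = cp C (g (n-1)) (cp C (f (n-1)) (snd X n))" using cmC f by simp
  also have "\<dots> = cp C (cp C (g (n-1)) (f (n-1))) (snd X n)"
    using assoc o cmT f g cxd X by metis
  finally show "cp C (snd W n) (cp C (g n) (f n)) = cp C (cp C (g (n - 1)) (f (n - 1))) (snd X n)" .
qed

lemma czero_cm:
  assumes X: "is_complex C X" and Y: "is_complex C Y"
  shows "chain_map C X Y (czero C X Y)"
  unfolding chain_map_def czero_def
  using zrT cxOb[OF X] cxOb[OF Y] zr_right[OF cxOb[OF X] cxOb[OF Y] cxOb[OF Y] cxd[OF Y]]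
    zr_left[OF cxOb[OF X] cxOb[OF X] cxOb[OF Y] cxd[OF X]] by simp

lemma boundary_map_chain:
  assumes W: "is_complex C W" and V: "is_complex C V" and h: "h \<in> Hm C (fst W j) (fst V (j + 1))"
  shows "chain_map C W V (boundary_map C W V j h)"
  unfolding chain_map_def
proof (intro allI conjI)
  fix n
  let ?\<psi> = "boundary_map C W V j h"
  note oW = cxOb[OF W] and oV = cxOb[OF V]
  have dW: "snd W (j + 1) \<in> Hm C (fst W (j + 1)) (fst W j)" using cxd_succ[OF W] .
  have dV: "snd V (j + 1) \<in> Hm C (fst V (j + 1)) (fst V j)" using cxd_succ[OF V] .
  have hd: "cp C h (snd W (j + 1)) \<in> Hm C (fst W (j + 1)) (fst V (j + 1))" using cpT[OF oW oW oV dW h] .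
  have dh: "cp C (snd V (j + 1)) h \<in> Hm C (fst W j) (fst V j)" using cpT[OF oW oV oV h dV] .
  show "?\<psi> n \<in> Hm C (fst W n) (fst V n)"
    using hd dh zrT[OF oW oV] unfolding boundary_map_def by auto
  consider "n = j + 1 + 1" | "n = j + 1" | "n = j" | "n \<noteq> j + 1 + 1" "n \<noteq> j + 1" "n \<noteq> j" by blast
  then show "cp C (snd V n) (?\<psi> n) = cp C (?\<psi> (n - 1)) (snd W n)"
  proof cases
    case 1
    have "cp C (cp C h (snd W (j + 1))) (snd W (j + 1 + 1)) = cp C h (cp C (snd W (j + 1)) (snd W (j + 1 + 1)))"
      by (rule assoc[OF oW oW oW oV cxd_succ[OF W] dW h, symmetric])
    also have "\<dots> = zr C (fst W (j + 1 + 1)) (fst V (j + 1))"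
      using cxdd_succ[OF W, of "j + 1"] zr_right[OF oW oW oV h] by simp
    finally show ?thesis using 1 zr_right[OF oW oV oV cxd[OF V]] unfolding boundary_map_def
      by (simp add: ac_simps)
  next
    case 2
    then show ?thesis unfolding boundary_map_def using assoc[OF oW oW oV oV dW h dV] by simp
  next
    case 3
    have "cp C (snd V j) (cp C (snd V (j + 1)) h) = cp C (cp C (snd V j) (snd V (j + 1))) h"
      using assoc[OF oW oV oV oV h dV cxd[OF V]] .
    also have "\<dots> = zr C (fst W j) (fst V (j - 1))" using cxdd_succ[OF V] zr_left[OF oW oV oV h] by simp
    finally show ?thesis using 3 zr_left[OF oW oW oV cxd[OF W]] unfolding boundary_map_def by simp
  next
    case 4
    then have "n - 1 \<noteq> j + 1" "n - 1 \<noteq> j" by auto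
    then show ?thesis using 4 zr_right[OF oW oV oV cxd[OF V]] zr_left[OF oW oW oV cxd[OF W]]
      unfolding boundary_map_def by simp
  qed
qed

subsection \<open>Disks\<close>

lemma disk_fst: "fst (disk C k c) n = (if n = k \<or> n = k - 1 then c else zobj C)"
  unfolding disk_def Let_def by simp

lemma disk_snd_top: "snd (disk C k c) k = ident C c"
  unfolding disk_def Let_def by simp

lemma chain_map_from_disk_eq:
  assumes c: "c \<in> Ob C" and H: "is_complex C H"
    and \<phi>: "chain_map C (disk C k c) H \<phi>" and \<phi>': "chain_map C (disk C k c) H \<phi>'"
    and top: "\<phi> k = \<phi>' k"
  shows "\<phi> = \<phi>'"
proof
  fix n
  have low: "\<phi>'' (k - 1) = cp C (snd H k) (\<phi>'' k)" if "chain_map C (disk C k c) H \<phi>''" for \<phi>''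
    using cmC[OF that, of k] idR[OF c cxOb[OF H]] cmT[OF that, of "k - 1"]
    by (simp add: disk_snd_top disk_fst)
  show "\<phi> n = \<phi>' n"
  proof (cases "n = k \<or> n = k - 1")
    case True
    then show ?thesis using top low[OF \<phi>] low[OF \<phi>'] by auto
  next
    case False
    then show ?thesis using cmT[OF \<phi>, of n] cmT[OF \<phi>', of n] zobj_from[OF cxOb[OF H]]
      by (auto simp: disk_fst)
  qed
qed

lemma chain_map_into_disk_eq:
  assumes c: "c \<in> Ob C" and H: "is_complex C H"
    and \<phi>: "chain_map C H (disk C k c) \<phi>" and \<phi>': "chain_map C H (disk C k c) \<phi>'"
    and bottom: "\<phi> (k - 1) = \<phi>' (k - 1)"
  shows "\<phi> = \<phi>'"
proof
  fix n
  have top: "\<phi>'' k = cp C (\<phi>'' (k - 1)) (snd H k)" if "chain_map C H (disk C k c) \<phi>''" for \<phi>''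
    using cmC[OF that, of k] idL[OF cxOb[OF H] c] cmT[OF that, of k]
    by (simp add: disk_snd_top disk_fst)
  show "\<phi> n = \<phi>' n"
  proof (cases "n = k \<or> n = k - 1")
    case True
    then show ?thesis using bottom top[OF \<phi>] top[OF \<phi>'] by auto
  next
    case False
    then show ?thesis using cmT[OF \<phi>, of n] cmT[OF \<phi>', of n] zobj_to[OF cxOb[OF H]]
      by (auto simp: disk_fst)
  qed
qed

end
definition has_lifts :: "('o,'m) abcat \<Rightarrow> ('o,'m) cx \<Rightarrow> ('o,'m) cx \<Rightarrow> ('o,'m) cx \<Rightarrow> (int \<Rightarrow> 'm) \<Rightarrow> bool" where
  "has_lifts C H Z X g \<longleftrightarrow> (\<forall>\<phi>\<in>chom C H X. \<exists>\<psi>\<in>chom C H Z. ccomp C g \<psi> = \<phi>)"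

definition has_extensions :: "('o,'m) abcat \<Rightarrow> ('o,'m) cx \<Rightarrow> ('o,'m) cx \<Rightarrow> ('o,'m) cx \<Rightarrow> (int \<Rightarrow> 'm) \<Rightarrow> bool" where
  "has_extensions C H Y Z f \<longleftrightarrow> (\<forall>\<phi>\<in>chom C Y H. \<exists>\<psi>\<in>chom C Z H. ccomp C \<psi> f = \<phi>)"

context abelian_category begin

lemma ses_chD:
  assumes "ses_ch C A B D f g"
  shows "is_complex C A" "is_complex C B" "is_complex C D" "chain_map C A B f" "chain_map C B D g"
    "\<And>n. short_exact C (fst A n) (fst B n) (fst D n) (f n) (g n)"
  using assms unfolding ses_ch_def by auto

lemma factor_through_mono_chain:
  assumes H: "is_complex C H" and A: "is_complex C A" and B: "is_complex C B"
    and f: "chain_map C A B f" and fm: "\<And>n. is_mono C (fst A n) (fst B n) (f n)"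
    and v: "chain_map C H B v"
    and uT: "\<And>n. u n \<in> Hm C (fst H n) (fst A n)" and fu: "\<And>n. cp C (f n) (u n) = v n"
  shows "chain_map C H A u"
  unfolding chain_map_def
proof (intro allI conjI)
  fix n
  note oH = cxOb[OF H] and oA = cxOb[OF A] and oB = cxOb[OF B] and fT = cmT[OF f]
  show "u n \<in> Hm C (fst H n) (fst A n)" by (rule uT)
  have "cp C (f (n-1)) (cp C (snd A n) (u n)) = cp C (cp C (snd B n) (f n)) (u n)"
    using assoc[OF oH oA oA oB uT cxd[OF A] fT] cmC[OF f] by simp
  also have "\<dots> = cp C (v (n-1)) (snd H n)"
    using assoc[OF oH oA oB oB uT fT cxd[OF B]] fu cmC[OF v] by simp
  also have "\<dots> = cp C (f (n-1)) (cp C (u (n-1)) (snd H n))"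
    using assoc[OF oH oH oA oB cxd[OF H] uT fT] fu by simp
  finally show "cp C (snd A n) (u n) = cp C (u (n - 1)) (snd H n)"
    using monoD[OF fm oH] cpT oH oA uT cxd[OF A] cxd[OF H] by blast
qed

lemma factor_through_epi_chain:
  assumes H: "is_complex C H" and B: "is_complex C B" and D: "is_complex C D"
    and g: "chain_map C B D g" and ge: "\<And>n. is_epi C (fst B n) (fst D n) (g n)"
    and v: "chain_map C B H v"
    and uT: "\<And>n. u n \<in> Hm C (fst D n) (fst H n)" and ug: "\<And>n. cp C (u n) (g n) = v n"
  shows "chain_map C D H u"
  unfolding chain_map_def
proof (intro allI conjI)
  fix n
  note oH = cxOb[OF H] and oB = cxOb[OF B] and oD = cxOb[OF D] and gT = cmT[OF g]
  show "u n \<in> Hm C (fst D n) (fst H n)" by (rule uT)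
  have "cp C (cp C (snd H n) (u n)) (g n) = cp C (v (n-1)) (snd B n)"
    using assoc[OF oB oD oH oH gT uT cxd[OF H]] ug cmC[OF v] by simp
  also have "\<dots> = cp C (u (n-1)) (cp C (snd D n) (g n))"
    using assoc[OF oB oB oD oH cxd[OF B] gT uT] ug cmC[OF g] by simp
  also have "\<dots> = cp C (cp C (u (n-1)) (snd D n)) (g n)"
    using assoc[OF oB oD oD oH gT cxd[OF D] uT] by simp
  finally show "cp C (snd H n) (u n) = cp C (u (n - 1)) (snd D n)"
    using epiD[OF ge oH] cpT oH oD uT cxd[OF D] cxd[OF H] by blast
qed

lemma hom_cov_injective:
  assumes S: "ses_ch C A B D f g" and H: "is_complex C H"
  shows "{u \<in> chom C H A. ccomp C f u = czero C H B} = {czero C H A}"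
proof -
  note s = ses_chD[OF S]
  note oA = cxOb[OF s(1)] and oB = cxOb[OF s(2)] and oH = cxOb[OF H]
  note fT = cmT[OF s(4)] and fm = ses_mono[OF s(6)]
  have f0: "ccomp C f (czero C H A) = czero C H B"
    using zr_right[OF oH oA oB fT] unfolding ccomp_def czero_def by simp
  show ?thesis
  proof (intro equalityI subsetI)
    fix u assume u: "u \<in> {u \<in> chom C H A. ccomp C f u = czero C H B}"
    have "u n = zr C (fst H n) (fst A n)" for n
      using monoD[OF fm oH cmT zrT[OF oH oA]] u fun_cong[of "ccomp C f u" "czero C H B" n]
        zr_right[OF oH oA oB fT] unfolding chom_def ccomp_def czero_def by auto
    then show "u \<in> {czero C H A}" unfolding czero_def by auto
  next
    fix u assume "u \<in> {czero C H A}"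
    then show "u \<in> {u \<in> chom C H A. ccomp C f u = czero C H B}"
      using f0 czero_cm[OF H s(1)] unfolding chom_def by simp
  qed
qed

lemma hom_cov_exact_middle:
  assumes S: "ses_ch C A B D f g" and H: "is_complex C H"
  shows "{v \<in> chom C H B. ccomp C g v = czero C H D} = (\<lambda>u. ccomp C f u) ` chom C H A"
proof -
  note s = ses_chD[OF S]
  note oA = cxOb[OF s(1)] and oB = cxOb[OF s(2)] and oD = cxOb[OF s(3)] and oH = cxOb[OF H]
  note fT = cmT[OF s(4)] and gT = cmT[OF s(5)] and fm = ses_mono[OF s(6)]
  show ?thesis
  proof (intro equalityI subsetI)
    fix v assume v: "v \<in> {v \<in> chom C H B. ccomp C g v = czero C H D}"
    have vT: "\<And>n. v n \<in> Hm C (fst H n) (fst B n)" using v cmT unfolding chom_def by blast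
    have "\<exists>u\<in>Hm C (fst H n) (fst A n). cp C (f n) u = v n" for n
    proof -
      have "cp C (g n) (v n) = zr C (fst H n) (fst D n)"
        using v fun_cong[of "ccomp C g v" "czero C H D" n] unfolding ccomp_def czero_def by simp
      then show ?thesis using kernel_factor[OF _ oH vT] s(6) unfolding short_exact_def by blast
    qed
    then obtain u where u: "\<And>n. u n \<in> Hm C (fst H n) (fst A n) \<and> cp C (f n) (u n) = v n" by metis
    have "chain_map C H A u"
      using factor_through_mono_chain[OF H s(1) s(2) s(4) fm] v u unfolding chom_def by blast
    moreover have "v = ccomp C f u" unfolding ccomp_def using u by auto
    ultimately show "v \<in> (\<lambda>u. ccomp C f u) ` chom C H A" unfolding chom_def by blast
  next
    fix v assume "v \<in> (\<lambda>u. ccomp C f u) ` chom C H A"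
    then obtain u where u: "u \<in> chom C H A" "v = ccomp C f u" by blast
    have "chain_map C H B v" using chain_comp[OF H s(1) s(2)] u s(4) unfolding chom_def by blast
    moreover have "cp C (g n) (cp C (f n) (u n)) = zr C (fst H n) (fst D n)" for n
    proof -
      have uT: "u n \<in> Hm C (fst H n) (fst A n)" using u(1) cmT unfolding chom_def by blast
      have "cp C (g n) (cp C (f n) (u n)) = cp C (cp C (g n) (f n)) (u n)"
        using assoc[OF oH oA oB oD uT fT gT] .
      then show ?thesis using ses_gf[OF s(6)] zr_left[OF oH oA oD uT] by simp
    qed
    ultimately show "v \<in> {v \<in> chom C H B. ccomp C g v = czero C H D}"
      using u(2) unfolding chom_def ccomp_def czero_def by auto
  qed
qed

lemma hom_contra_injective:
  assumes S: "ses_ch C A B D f g" and H: "is_complex C H"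
  shows "{u \<in> chom C D H. ccomp C u g = czero C B H} = {czero C D H}"
proof -
  note s = ses_chD[OF S]
  note oB = cxOb[OF s(2)] and oD = cxOb[OF s(3)] and oH = cxOb[OF H]
  note gT = cmT[OF s(5)] and ge = ses_epi[OF s(6)]
  have g0: "ccomp C (czero C D H) g = czero C B H"
    using zr_left[OF oB oD oH gT] unfolding ccomp_def czero_def by simp
  show ?thesis
  proof (intro equalityI subsetI)
    fix u assume u: "u \<in> {u \<in> chom C D H. ccomp C u g = czero C B H}"
    have "u n = zr C (fst D n) (fst H n)" for n
      using epiD[OF ge oH cmT zrT[OF oD oH]] u fun_cong[of "ccomp C u g" "czero C B H" n]
        zr_left[OF oB oD oH gT] unfolding chom_def ccomp_def czero_def by auto
    then show "u \<in> {czero C D H}" unfolding czero_def by auto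
  next
    fix u assume "u \<in> {czero C D H}"
    then show "u \<in> {u \<in> chom C D H. ccomp C u g = czero C B H}"
      using g0 czero_cm[OF s(3) H] unfolding chom_def by simp
  qed
qed

lemma hom_contra_exact_middle:
  assumes S: "ses_ch C A B D f g" and H: "is_complex C H"
  shows "{v \<in> chom C B H. ccomp C v f = czero C A H} = (\<lambda>u. ccomp C u g) ` chom C D H"
proof -
  note s = ses_chD[OF S]
  note oA = cxOb[OF s(1)] and oB = cxOb[OF s(2)] and oD = cxOb[OF s(3)] and oH = cxOb[OF H]
  note fT = cmT[OF s(4)] and gT = cmT[OF s(5)] and ge = ses_epi[OF s(6)]
  show ?thesis
  proof (intro equalityI subsetI)
    fix v assume v: "v \<in> {v \<in> chom C B H. ccomp C v f = czero C A H}"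
    have vT: "\<And>n. v n \<in> Hm C (fst B n) (fst H n)" using v cmT unfolding chom_def by blast
    have "\<exists>u\<in>Hm C (fst D n) (fst H n). cp C u (g n) = v n" for n
    proof -
      have "cp C (v n) (f n) = zr C (fst A n) (fst H n)"
        using v fun_cong[of "ccomp C v f" "czero C A H" n] unfolding ccomp_def czero_def by simp
      then show ?thesis using cokernel_factor[OF _ oH vT] s(6) unfolding short_exact_def by blast
    qed
    then obtain u where u: "\<And>n. u n \<in> Hm C (fst D n) (fst H n) \<and> cp C (u n) (g n) = v n" by metis
    have "chain_map C D H u"
      using factor_through_epi_chain[OF H s(2) s(3) s(5) ge] v u unfolding chom_def by blast
    moreover have "v = ccomp C u g" unfolding ccomp_def using u by auto
    ultimately show "v \<in> (\<lambda>u. ccomp C u g) ` chom C D H" unfolding chom_def by blast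
  next
    fix v assume "v \<in> (\<lambda>u. ccomp C u g) ` chom C D H"
    then obtain u where u: "u \<in> chom C D H" "v = ccomp C u g" by blast
    have "chain_map C B H v" using chain_comp[OF s(2) s(3) H] u s(5) unfolding chom_def by blast
    moreover have "cp C (cp C (u n) (g n)) (f n) = zr C (fst A n) (fst H n)" for n
    proof -
      have uT: "u n \<in> Hm C (fst D n) (fst H n)" using u(1) cmT unfolding chom_def by blast
      have "cp C (cp C (u n) (g n)) (f n) = cp C (u n) (cp C (g n) (f n))"
        using assoc[OF oA oB oD oH fT gT uT] by simp
      then show ?thesis using ses_gf[OF s(6)] zr_right[OF oA oD oH uT] by simp
    qed
    ultimately show "v \<in> {v \<in> chom C B H. ccomp C v f = czero C A H}"
      using u(2) unfolding chom_def ccomp_def czero_def by auto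
  qed
qed

lemma hom_exact_cov_iff:
  assumes S: "ses_ch C A B D f g" and H: "is_complex C H"
  shows "hom_exact_cov C H A B D f g \<longleftrightarrow> has_lifts C H B D g"
proof -
  note s = ses_chD[OF S]
  have into: "(\<lambda>v. ccomp C g v) ` chom C H B \<subseteq> chom C H D"
    using chain_comp[OF H s(2) s(3) _ s(5)] unfolding chom_def by blast
  have "hom_exact_cov C H A B D f g \<longleftrightarrow> (\<lambda>v. ccomp C g v) ` chom C H B = chom C H D"
    unfolding hom_exact_cov_def using hom_cov_injective[OF S H] hom_cov_exact_middle[OF S H] by simp
  also have "\<dots> \<longleftrightarrow> chom C H D \<subseteq> (\<lambda>v. ccomp C g v) ` chom C H B" using into by blast
  also have "\<dots> \<longleftrightarrow> has_lifts C H B D g" unfolding has_lifts_def by (auto simp: image_iff)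
  finally show ?thesis .
qed

lemma hom_exact_contra_iff:
  assumes S: "ses_ch C A B D f g" and H: "is_complex C H"
  shows "hom_exact_contra C H A B D f g \<longleftrightarrow> has_extensions C H A B f"
proof -
  note s = ses_chD[OF S]
  have into: "(\<lambda>v. ccomp C v f) ` chom C B H \<subseteq> chom C A H"
    using chain_comp[OF s(1) s(2) H s(4)] unfolding chom_def by blast
  have "hom_exact_contra C H A B D f g \<longleftrightarrow> (\<lambda>v. ccomp C v f) ` chom C B H = chom C A H"
    unfolding hom_exact_contra_def using hom_contra_injective[OF S H] hom_contra_exact_middle[OF S H] by simp
  also have "\<dots> \<longleftrightarrow> chom C A H \<subseteq> (\<lambda>v. ccomp C v f) ` chom C B H" using into by blast
  also have "\<dots> \<longleftrightarrow> has_extensions C H A B f" unfolding has_extensions_def by (auto simp: image_iff)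
  finally show ?thesis .
qed

end
context abelian_category begin

subsection \<open>Exact complexes with cycles in an extension-closed class\<close>

lemma epi_cokernel_of_kernel:
  assumes k: "is_kernel C B D e A k" and o: "B \<in> Ob C" "D \<in> Ob C"
    and eT: "e \<in> Hm C B D" and epi: "is_epi C B D e"
  shows "is_cokernel C A B k D e"
  unfolding is_cokernel_def
proof (intro conjI ballI impI)
  have A: "A \<in> Ob C" and kT: "k \<in> Hm C A B" and "cp C e k = zr C A D" using kerD[OF k] by auto
  then show "D \<in> Ob C" "e \<in> Hm C B D" "cp C e k = zr C A D" using o eT by auto
  obtain D0 h0 where D0: "D0 \<in> Ob C" and h0T: "h0 \<in> Hm C D0 B" and ck0: "is_cokernel C D0 B h0 D e"
    using epi_is_cokernel[OF o eT epi] by blast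
  have eh0: "cp C e h0 = zr C D0 D" using ck0 unfolding is_cokernel_def by blast
  obtain t where tT: "t \<in> Hm C D0 A" and kt: "cp C k t = h0"
    using kernel_factor[OF k D0 h0T eh0] by blast
  fix W h assume W: "W \<in> Ob C" and h: "h \<in> Hm C B W" and hk: "cp C h k = zr C A W"
  have "cp C h h0 = cp C (cp C h k) t" using kt assoc[OF D0 A o(1) W tT kT h] by simp
  also have "\<dots> = zr C D0 W" using hk zr_left[OF D0 A W tT] by simp
  finally have "cp C h h0 = zr C D0 W" .
  then show "\<exists>!u. u \<in> Hm C D W \<and> cp C u e = h" using ck0 W h unfolding is_cokernel_def by blast
qed

lemma corestriction_kernel:
  assumes o: "Xn \<in> Ob C" "X1 \<in> Ob C" "X2 \<in> Ob C"
    and ker: "is_kernel C Xn X1 d K k" and ker': "is_kernel C X1 X2 d' K' k'"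
    and d'T: "d' \<in> Hm C X1 X2" and eT: "e \<in> Hm C Xn K'" and ke: "cp C k' e = d"
  shows "is_kernel C Xn K' e K k"
  unfolding is_kernel_def
proof (intro conjI ballI impI)
  have oK: "K \<in> Ob C" and kT: "k \<in> Hm C K Xn" and dk: "cp C d k = zr C K X1" using kerD[OF ker] by auto
  have oK': "K' \<in> Ob C" and k'T: "k' \<in> Hm C K' X1" using kerD[OF ker'] by auto
  have mk': "is_mono C K' X1 k'" using kernel_mono[OF ker' o(2,3) d'T] .
  show "K \<in> Ob C" "k \<in> Hm C K Xn" using oK kT by auto
  have "cp C k' (cp C e k) = cp C d k" using assoc[OF oK o(1) oK' o(2) kT eT k'T] ke by simp
  also have "\<dots> = cp C k' (zr C K K')" using dk zr_right[OF oK oK' o(2) k'T] by simp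
  finally show "cp C e k = zr C K K'"
    using monoD[OF mk' oK] cpT[OF oK o(1) oK' kT eT] zrT[OF oK oK'] by blast
  fix W h assume W: "W \<in> Ob C" and h: "h \<in> Hm C W Xn" and eh: "cp C e h = zr C W K'"
  have "cp C d h = cp C k' (cp C e h)" using assoc[OF W o(1) oK' o(2) h eT k'T] ke by simp
  then have "cp C d h = zr C W X1" using eh zr_right[OF W oK' o(2) k'T] by simp
  then show "\<exists>!u. u \<in> Hm C W K \<and> cp C k u = h" using ker W h unfolding is_kernel_def by blast
qed

text \<open>In the same situation, if the complex is exact at \<open>X\<^sub>n\<^sub>-\<^sub>1\<close>, then \<open>e\<close> is epi: a morphism \<open>x\<close> out of \<open>K'\<close>
  killed by \<open>e\<close> vanishes, because \<open>e\<close> factors through the kernel \<open>\<kappa>\<close> of \<open>x\<close>, which by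
  exactness must then be split epi.\<close>
lemma corestriction_epi:
  assumes o: "Xn \<in> Ob C" "X1 \<in> Ob C" "X2 \<in> Ob C"
    and ex: "exact_at C Xn X1 X2 d d'" and ker': "is_kernel C X1 X2 d' K' k'"
    and eT: "e \<in> Hm C Xn K'" and ke: "cp C k' e = d"
  shows "is_epi C Xn K' e"
  unfolding is_epi_def
proof (intro conjI ballI impI)
  have d'T: "d' \<in> Hm C X1 X2" using ex unfolding exact_at_def by blast
  have oK': "K' \<in> Ob C" and k'T: "k' \<in> Hm C K' X1" and dk': "cp C d' k' = zr C K' X2"
    using kerD[OF ker'] by auto
  have mk': "is_mono C K' X1 k'" using kernel_mono[OF ker' o(2,3) d'T] .
  show "e \<in> Hm C Xn K'" by (rule eT)
  fix W a b assume W: "W \<in> Ob C" and a: "a \<in> Hm C K' W" and b: "b \<in> Hm C K' W" and ab: "cp C a e = cp C b e"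
  define x where "x = ad C a (ng C b)"
  have xT: "x \<in> Hm C K' W" unfolding x_def using adT ngT oK' W a b by blast
  have xe: "cp C x e = zr C Xn W" unfolding x_def using diff_compR_zero[OF o(1) oK' W a b eT ab] .
  obtain Kx \<kappa> where kx: "is_kernel C K' W x Kx \<kappa>" using ker_ex[OF oK' W xT] by blast
  have oKx: "Kx \<in> Ob C" and \<kappa>T: "\<kappa> \<in> Hm C Kx K'" and x\<kappa>: "cp C x \<kappa> = zr C Kx W" using kerD[OF kx] by auto
  obtain e' where e'T: "e' \<in> Hm C Xn Kx" and ke': "cp C \<kappa> e' = e" using kernel_factor[OF kx o(1) eT xe] by blast
  have mT: "cp C k' \<kappa> \<in> Hm C Kx X1" using cpT[OF oKx oK' o(2) \<kappa>T k'T] .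
  have mm: "is_mono C Kx X1 (cp C k' \<kappa>)" using mono_comp[OF oKx oK' o(2) mk' kernel_mono[OF kx oK' W xT]] .
  obtain D g' where D: "D \<in> Ob C" and g'T: "g' \<in> Hm C X1 D" and gk: "is_kernel C X1 D g' Kx (cp C k' \<kappa>)"
    using mono_is_kernel[OF oKx o(2) mT mm] by blast
  have "cp C g' d = cp C g' (cp C (cp C k' \<kappa>) e')"
    using ke ke' assoc[OF o(1) oKx oK' o(2) e'T \<kappa>T k'T] by simp
  also have "\<dots> = cp C (cp C g' (cp C k' \<kappa>)) e'" using assoc[OF o(1) oKx o(2) D e'T mT g'T] .
  also have "\<dots> = zr C Xn D" using kerD[OF gk] zr_left[OF o(1) oKx D e'T] by simp
  finally have "cp C g' k' = zr C K' D"
    using ex k'T dk' D g'T oK' unfolding exact_at_def by blast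
  then obtain j where jT: "j \<in> Hm C K' Kx" and mj: "cp C (cp C k' \<kappa>) j = k'"
    using kernel_factor[OF gk oK' k'T] by blast
  have "cp C k' (cp C \<kappa> j) = cp C k' (ident C K')"
    using assoc[OF oK' oKx oK' o(2) jT \<kappa>T k'T] mj idR[OF oK' o(2) k'T] by simp
  then have kj: "cp C \<kappa> j = ident C K'"
    using monoD[OF mk' oK'] cpT[OF oK' oKx oK' jT \<kappa>T] idT[OF oK'] by blast
  have "x = cp C (cp C x \<kappa>) j" using kj idR[OF oK' W xT] assoc[OF oK' oKx oK' W jT \<kappa>T xT] by simp
  also have "\<dots> = zr C K' W" using x\<kappa> zr_left[OF oK' oKx W jT] by simp
  finally show "a = b" using diff_zero[OF oK' W a b] unfolding x_def by blast
qed

text \<open>Hence every exact complex with cycles in an extension-closed class \<open>\<F>\<close> has all its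
  components in \<open>\<F>\<close>, via \<open>0 \<rightarrow> Z\<^sub>n \<rightarrow> X\<^sub>n \<rightarrow> Z\<^sub>n\<^sub>-\<^sub>1 \<rightarrow> 0\<close>.\<close>
lemma tilde_subset_dwtilde:
  assumes ce: "closed_ext C \<F>"
  shows "tilde C \<F> \<subseteq> dwtilde C \<F>"
proof
  fix X assume X: "X \<in> tilde C \<F>"
  have cx: "is_complex C X" and ex: "exact_complex C X"
    and kk: "\<And>n. \<exists>K k. is_kernel C (fst X n) (fst X (n - 1)) (snd X n) K k \<and> K \<in> \<F>"
    using X unfolding tilde_def by auto
  have "fst X n \<in> \<F>" for n
  proof -
    note o = cxOb[OF cx, of n] cxOb[OF cx, of "n - 1"] cxOb[OF cx, of "n - 1 - 1"]
    have d'T: "snd X (n - 1) \<in> Hm C (fst X (n - 1)) (fst X (n - 1 - 1))" using cxd[OF cx] .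
    have dd: "cp C (snd X (n - 1)) (snd X n) = zr C (fst X n) (fst X (n - 1 - 1))"
      using cxdd[OF cx, of n] by (simp add: diff_diff_eq)
    have exn: "exact_at C (fst X n) (fst X (n - 1)) (fst X (n - 1 - 1)) (snd X n) (snd X (n - 1))"
      using ex[unfolded exact_complex_def, rule_format, of "n - 1"] by simp
    obtain K k where Kk: "is_kernel C (fst X n) (fst X (n - 1)) (snd X n) K k" "K \<in> \<F>"
      using kk by blast
    obtain K' k' where Kk': "is_kernel C (fst X (n - 1)) (fst X (n - 1 - 1)) (snd X (n - 1)) K' k'" "K' \<in> \<F>"
      using kk by blast
    obtain e where eT: "e \<in> Hm C (fst X n) K'" and ke: "cp C k' e = snd X n"
      using kernel_factor[OF Kk'(1) o(1) cxd[OF cx] dd] by blast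
    have ker: "is_kernel C (fst X n) K' e K k" by (rule corestriction_kernel[OF o Kk(1) Kk'(1) d'T eT ke])
    have epi: "is_epi C (fst X n) K' e" by (rule corestriction_epi[OF o exn Kk'(1) eT ke])
    have "is_cokernel C K (fst X n) k K' e"
      using epi_cokernel_of_kernel[OF ker o(1) _ eT epi] kerD[OF Kk'(1)] by blast
    then have "short_exact C K (fst X n) K' k e"
      unfolding short_exact_def using ker kerD[OF ker] o eT by blast
    then show "fst X n \<in> \<F>" using ce Kk(2) Kk'(2) unfolding closed_ext_def by blast
  qed
  then show "X \<in> dwtilde C \<F>" using cx unfolding dwtilde_def by blast
qed

end
definition is_biproduct :: "('o,'m) abcat \<Rightarrow> 'o \<Rightarrow> 'o \<Rightarrow> 'm \<Rightarrow> 'm \<Rightarrow> 'm \<Rightarrow> 'm \<Rightarrow> bool" where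
  "is_biproduct C A P i1 i2 p1 p2 \<longleftrightarrow> P \<in> Ob C \<and> i1 \<in> Hm C A P \<and> i2 \<in> Hm C A P \<and>
     p1 \<in> Hm C P A \<and> p2 \<in> Hm C P A \<and>
     cp C p1 i1 = ident C A \<and> cp C p2 i2 = ident C A \<and>
     cp C p2 i1 = zr C A A \<and> cp C p1 i2 = zr C A A \<and>
     ad C (cp C i1 p1) (cp C i2 p2) = ident C P"

text \<open>The complex with \<open>A \<oplus> A\<close> in every degree and differential \<open>i2 \<circ> p1\<close>, i.e. the
  direct sum of all disks \<open>D\<^sup>n(A)\<close>: it is exact and all its cycles are \<open>A\<close>.\<close>
definition biprod_complex :: "('o,'m) abcat \<Rightarrow> 'o \<Rightarrow> 'm \<Rightarrow> 'm \<Rightarrow> ('o,'m) cx" where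
  "biprod_complex C P i2 p1 = ((\<lambda>n. P), (\<lambda>n. cp C i2 p1))"

context abelian_category begin

subsection \<open>A test complex in \<open>\<F>\<^sup>~\<close> built from a single object of \<open>\<F>\<close>\<close>

lemma biproduct_ex: "A \<in> Ob C \<Longrightarrow> \<exists>P i1 i2 p1 p2. is_biproduct C A P i1 i2 p1 p2"
  using abel unfolding abelian_def has_biproducts_def is_biproduct_def by blast

context
  fixes A P i1 i2 p1 p2
  assumes bp: "is_biproduct C A P i1 i2 p1 p2" and oA: "A \<in> Ob C"
begin

lemma bpD: "P \<in> Ob C" "i1 \<in> Hm C A P" "i2 \<in> Hm C A P" "p1 \<in> Hm C P A" "p2 \<in> Hm C P A"
     "cp C p1 i1 = ident C A" "cp C p2 i2 = ident C A"
     "cp C p2 i1 = zr C A A" "cp C p1 i2 = zr C A A"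
     "ad C (cp C i1 p1) (cp C i2 p2) = ident C P"
  using bp unfolding is_biproduct_def by auto

lemmas oP = bpD(1)

lemma dT: "cp C i2 p1 \<in> Hm C P P" using cpT[OF oP oA oP bpD(4) bpD(3)] .

lemma p2d: "cp C p2 (cp C i2 p1) = p1"
  using assoc[OF oP oA oP oA bpD(4) bpD(3) bpD(5)] bpD(7) idL[OF oP oA bpD(4)] by simp

lemma di1: "cp C (cp C i2 p1) i1 = i2"
  using assoc[OF oA oP oA oP bpD(2) bpD(4) bpD(3)] bpD(6) idR[OF oA oP bpD(3)] by simp

lemma di2: "cp C (cp C i2 p1) i2 = zr C A P"
  using assoc[OF oA oP oA oP bpD(3) bpD(4) bpD(3)] bpD(9) zr_right[OF oA oA oP bpD(3)] by simp

lemma dd: "cp C (cp C i2 p1) (cp C i2 p1) = zr C P P"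
  using assoc[OF oP oA oP oP bpD(4) bpD(3) dT] di2 zr_left[OF oP oA oP bpD(4)] by simp

lemma decompL:
  assumes W: "W \<in> Ob C" and h: "h \<in> Hm C W P"
  shows "h = ad C (cp C i1 (cp C p1 h)) (cp C i2 (cp C p2 h))"
proof -
  have "h = cp C (ad C (cp C i1 p1) (cp C i2 p2)) h" using bpD(10) idL[OF W oP h] by simp
  also have "\<dots> = ad C (cp C (cp C i1 p1) h) (cp C (cp C i2 p2) h)"
    using distR[OF W oP oP h] cpT oP oA bpD by blast
  also have "\<dots> = ad C (cp C i1 (cp C p1 h)) (cp C i2 (cp C p2 h))"
    using assoc[OF W oP oA oP h bpD(4) bpD(2)] assoc[OF W oP oA oP h bpD(5) bpD(3)] by simp
  finally show ?thesis .
qed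

lemma cycle_p1:
  assumes X: "X \<in> Ob C" and h: "h \<in> Hm C X P" and dh: "cp C (cp C i2 p1) h = zr C X P"
  shows "cp C p1 h = zr C X A"
proof -
  have "cp C p1 h = cp C p2 (cp C (cp C i2 p1) h)"
    using assoc[OF X oP oP oA h dT bpD(5)] p2d by simp
  also have "\<dots> = zr C X A" using dh zr_right[OF X oP oA bpD(5)] by simp
  finally show ?thesis .
qed

lemma biprod_complex_cx: "is_complex C (biprod_complex C P i2 p1)"
  unfolding is_complex_def biprod_complex_def using oP dT dd by simp

lemma biprod_exact: "exact_at C P P P (cp C i2 p1) (cp C i2 p1)"
  unfolding exact_at_def
proof (intro conjI ballI impI)
  show "cp C i2 p1 \<in> Hm C P P" "cp C i2 p1 \<in> Hm C P P" "cp C (cp C i2 p1) (cp C i2 p1) = zr C P P"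
    using dT dd by auto
  fix X h Y c assume X: "X \<in> Ob C" and h: "h \<in> Hm C X P" and dh: "cp C (cp C i2 p1) h = zr C X P"
    and Y: "Y \<in> Ob C" and c: "c \<in> Hm C P Y" and cd: "cp C c (cp C i2 p1) = zr C P Y"
  have p1h: "cp C p1 h = zr C X A" by (rule cycle_p1[OF X h dh])
  have ci2: "cp C c i2 = zr C A Y"
    using assoc[OF oA oP oP Y bpD(2) dT c] di1 cd zr_left[OF oA oP Y bpD(2)] by simp
  have ci1: "cp C c i1 \<in> Hm C A Y" using cpT[OF oA oP Y bpD(2) c] .
  have p2h: "cp C p2 h \<in> Hm C X A" using cpT[OF X oP oA h bpD(5)] .
  have "cp C c h = ad C (cp C c (cp C i1 (cp C p1 h))) (cp C c (cp C i2 (cp C p2 h)))"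
    using decompL[OF X h] distL[OF X oP Y _ _ c] cpT[OF X oA oP _ bpD(2)] cpT[OF X oA oP p2h bpD(3)]
      cpT[OF X oP oA h bpD(4)] by metis
  also have "\<dots> = ad C (cp C (cp C c i1) (cp C p1 h)) (cp C (cp C c i2) (cp C p2 h))"
    using assoc[OF X oA oP Y _ bpD(2) c] cpT[OF X oP oA h bpD(4)] assoc[OF X oA oP Y p2h bpD(3) c] by simp
  also have "\<dots> = zr C X Y"
    using p1h ci2 zr_right[OF X oA Y ci1] zr_left[OF X oA Y p2h] ad_zr zrT X Y by simp
  finally show "cp C c h = zr C X Y" .
qed

lemma biprod_kernel: "is_kernel C P P (cp C i2 p1) A i2"
  unfolding is_kernel_def
proof (intro conjI ballI impI)
  show "A \<in> Ob C" "i2 \<in> Hm C A P" "cp C (cp C i2 p1) i2 = zr C A P" using oA bpD di2 by auto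
  fix X h assume X: "X \<in> Ob C" and h: "h \<in> Hm C X P" and dh: "cp C (cp C i2 p1) h = zr C X P"
  have p2h: "cp C p2 h \<in> Hm C X A" using cpT[OF X oP oA h bpD(5)] .
  have "h = ad C (cp C i1 (zr C X A)) (cp C i2 (cp C p2 h))" using decompL[OF X h] cycle_p1[OF X h dh] by simp
  also have "\<dots> = cp C i2 (cp C p2 h)"
    using zr_right[OF X oA oP bpD(2)] zr_ad[OF X oP] cpT[OF X oA oP p2h bpD(3)] by simp
  finally have hh: "cp C i2 (cp C p2 h) = h" by simp
  have "u = v" if u: "u \<in> Hm C X A" and v: "v \<in> Hm C X A" and e: "cp C i2 u = cp C i2 v" for u v
    using e assoc[OF X oA oP oA u bpD(3) bpD(5)] assoc[OF X oA oP oA v bpD(3) bpD(5)]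
      bpD(7) idL[OF X oA u] idL[OF X oA v] by metis
  then show "\<exists>!u. u \<in> Hm C X A \<and> cp C i2 u = h" using hh p2h by blast
qed

lemma biprod_complex_tilde: "A \<in> \<F> \<Longrightarrow> biprod_complex C P i2 p1 \<in> tilde C \<F>"
  unfolding tilde_def exact_complex_def
  using biprod_complex_cx biprod_exact biprod_kernel by (auto simp: biprod_complex_def)

end

text \<open>If every complex of \<open>\<F>\<^sup>~\<close> lifts along \<open>g : Z \<rightarrow> X\<close>, then every morphism from an
  object of \<open>\<F>\<close> into some \<open>X\<^sub>k\<close> lifts along \<open>g\<^sub>k\<close>: map the test complex of \<open>A\<close> to \<open>X\<close>
  by \<open>d h + h d\<close> with \<open>h = \<alpha> \<circ> p2\<close>, lift, and restrict along \<open>i1\<close>.\<close>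
lemma lift_object_from_tilde:
  assumes lifts: "\<forall>H\<in>tilde C \<F>. has_lifts C H Z X g"
    and A: "A \<in> \<F>" "A \<in> Ob C" and Z: "is_complex C Z" and X: "is_complex C X"
    and g: "chain_map C Z X g" and \<alpha>: "\<alpha> \<in> Hm C A (fst X k)"
  shows "\<exists>l\<in>Hm C A (fst Z k). cp C (g k) l = \<alpha>"
proof -
  obtain P i1 i2 p1 p2 where bp: "is_biproduct C A P i1 i2 p1 p2" using biproduct_ex[OF A(2)] by blast
  note b = bpD[OF bp A(2)]
  let ?T = "biprod_complex C P i2 p1"
  have T: "is_complex C ?T" using biprod_complex_cx[OF bp A(2)] .
  have h: "cp C \<alpha> p2 \<in> Hm C (fst ?T (k - 1)) (fst X (k - 1 + 1))"
    using cpT[OF b(1) A(2) cxOb[OF X] b(5) \<alpha>] by (simp add: biprod_complex_def)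
  let ?\<phi> = "boundary_map C ?T X (k - 1) (cp C \<alpha> p2)"
  have "?\<phi> \<in> chom C ?T X" using boundary_map_chain[OF T X h] unfolding chom_def by blast
  then obtain \<Psi> where \<Psi>: "\<Psi> \<in> chom C ?T Z" "ccomp C g \<Psi> = ?\<phi>"
    using lifts biprod_complex_tilde[OF bp A(2) A(1)] unfolding has_lifts_def by blast
  have \<Psi>T: "\<Psi> k \<in> Hm C P (fst Z k)" using cmT[of ?T Z \<Psi> k] \<Psi>(1)
    unfolding chom_def by (simp add: biprod_complex_def)
  have g\<Psi>: "cp C (g k) (\<Psi> k) = cp C (cp C \<alpha> p2) (cp C i2 p1)"
    using fun_cong[OF \<Psi>(2), of k] unfolding ccomp_def boundary_map_def by (simp add: biprod_complex_def)
  have "cp C (g k) (cp C (\<Psi> k) i1) = cp C (cp C (cp C \<alpha> p2) (cp C i2 p1)) i1"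
    using assoc[OF A(2) b(1) cxOb[OF Z] cxOb[OF X] b(2) \<Psi>T cmT[OF g]] g\<Psi> by simp
  also have "\<dots> = cp C (cp C \<alpha> p2) i2"
    using assoc[OF A(2) b(1) b(1) cxOb[OF X] b(2) dT[OF bp A(2)] cpT[OF b(1) A(2) cxOb[OF X] b(5) \<alpha>]]
      di1[OF bp A(2)] by simp
  also have "\<dots> = \<alpha>" using assoc[OF A(2) b(1) A(2) cxOb[OF X] b(3) b(5) \<alpha>] b(7) idR[OF A(2) cxOb[OF X] \<alpha>]
    by simp
  finally show ?thesis using cpT[OF A(2) b(1) cxOb[OF Z] b(2) \<Psi>T] by blast
qed

text \<open>Dually, if every complex of \<open>\<F>\<^sup>~\<close> extends along \<open>f : Y \<rightarrow> Z\<close>, then every morphism from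
  some \<open>Y\<^sub>j\<close> into an object of \<open>\<F>\<close> extends along \<open>f\<^sub>j\<close> (use \<open>h = i1 \<circ> \<beta>\<close> and \<open>p2\<close>).\<close>
lemma extend_object_from_tilde:
  assumes exts: "\<forall>H\<in>tilde C \<F>. has_extensions C H Y Z f"
    and A: "A \<in> \<F>" "A \<in> Ob C" and Y: "is_complex C Y" and Z: "is_complex C Z"
    and f: "chain_map C Y Z f" and \<beta>: "\<beta> \<in> Hm C (fst Y j) A"
  shows "\<exists>l\<in>Hm C (fst Z j) A. cp C l (f j) = \<beta>"
proof -
  obtain P i1 i2 p1 p2 where bp: "is_biproduct C A P i1 i2 p1 p2" using biproduct_ex[OF A(2)] by blast
  note b = bpD[OF bp A(2)]
  let ?T = "biprod_complex C P i2 p1"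
  have T: "is_complex C ?T" using biprod_complex_cx[OF bp A(2)] .
  have i1\<beta>: "cp C i1 \<beta> \<in> Hm C (fst Y j) P" using cpT[OF cxOb[OF Y] A(2) b(1) \<beta> b(2)] .
  then have h: "cp C i1 \<beta> \<in> Hm C (fst Y j) (fst ?T (j + 1))" by (simp add: biprod_complex_def)
  let ?\<phi> = "boundary_map C Y ?T j (cp C i1 \<beta>)"
  have "?\<phi> \<in> chom C Y ?T" using boundary_map_chain[OF Y T h] unfolding chom_def by blast
  then obtain \<Psi> where \<Psi>: "\<Psi> \<in> chom C Z ?T" "ccomp C \<Psi> f = ?\<phi>"
    using exts biprod_complex_tilde[OF bp A(2) A(1)] unfolding has_extensions_def by blast
  have \<Psi>T: "\<Psi> j \<in> Hm C (fst Z j) P" using cmT[of Z ?T \<Psi> j] \<Psi>(1)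
    unfolding chom_def by (simp add: biprod_complex_def)
  have \<Psi>f: "cp C (\<Psi> j) (f j) = cp C (cp C i2 p1) (cp C i1 \<beta>)"
    using fun_cong[OF \<Psi>(2), of j] unfolding ccomp_def boundary_map_def by (simp add: biprod_complex_def)
  have "cp C (cp C p2 (\<Psi> j)) (f j) = cp C p2 (cp C (cp C i2 p1) (cp C i1 \<beta>))"
    using assoc[OF cxOb[OF Y] cxOb[OF Z] b(1) A(2) cmT[OF f] \<Psi>T b(5)] \<Psi>f by simp
  also have "\<dots> = cp C p2 (cp C i2 \<beta>)"
    using assoc[OF cxOb[OF Y] A(2) b(1) b(1) \<beta> b(2) dT[OF bp A(2)]] di1[OF bp A(2)] by simp
  also have "\<dots> = \<beta>" using assoc[OF cxOb[OF Y] A(2) b(1) A(2) \<beta> b(3) b(5)] b(7) idL[OF cxOb[OF Y] A(2) \<beta>]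
    by simp
  finally show ?thesis using cpT[OF cxOb[OF Z] b(1) A(2) \<Psi>T b(5)] by blast
qed

end
context abelian_category begin

lemma disk_kernel_differential:
  assumes S: "ses_ch C (disk C (m + 1) c) Z X f g" and c: "c \<in> Ob C"
  shows "cp C (snd Z (m + 1)) (f (m + 1)) = f m"
proof -
  note s = ses_chD[OF S]
  have "f m \<in> Hm C c (fst Z m)" using cmT[OF s(4), of m] by (simp add: disk_fst)
  then show ?thesis using cmC[OF s(4), of "m + 1"] idR[OF c cxOb[OF s(2)]] by (simp add: disk_snd_top)
qed

lemma disk_quotient_differential:
  assumes S: "ses_ch C Y Z (disk C m c) f g" and c: "c \<in> Ob C"
  shows "cp C (g (m - 1)) (snd Z m) = g m"
proof -
  note s = ses_chD[OF S]
  have "g m \<in> Hm C (fst Z m) c" using cmT[OF s(5), of m] by (simp add: disk_fst)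
  then show ?thesis using cmC[OF s(5), of m] idL[OF cxOb[OF s(2)] c] by (simp add: disk_snd_top)
qed

lemma lift_defect:
  assumes H: "is_complex C H" and Z: "is_complex C Z" and X: "is_complex C X"
    and g: "chain_map C Z X g" and \<phi>: "chain_map C H X \<phi>"
    and \<psi>T: "\<And>n. \<psi> n \<in> Hm C (fst H n) (fst Z n)" and g\<psi>: "\<And>n. cp C (g n) (\<psi> n) = \<phi> n"
  shows "cp C (g (n - 1)) (cp C (snd Z n) (\<psi> n)) = cp C (g (n - 1)) (cp C (\<psi> (n - 1)) (snd H n))"
proof -
  note oH = cxOb[OF H] and oZ = cxOb[OF Z] and oX = cxOb[OF X]
  have "cp C (g (n - 1)) (cp C (snd Z n) (\<psi> n)) = cp C (cp C (g (n - 1)) (snd Z n)) (\<psi> n)"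
    by (rule assoc[OF oH oZ oZ oX \<psi>T cxd[OF Z] cmT[OF g]])
  also have "\<dots> = cp C (cp C (snd X n) (g n)) (\<psi> n)" using cmC[OF g] by simp
  also have "\<dots> = cp C (snd X n) (cp C (g n) (\<psi> n))"
    by (rule assoc[OF oH oZ oX oX \<psi>T cmT[OF g] cxd[OF X], symmetric])
  also have "\<dots> = cp C (cp C (g (n - 1)) (\<psi> (n - 1))) (snd H n)" using g\<psi> cmC[OF \<phi>] by simp
  also have "\<dots> = cp C (g (n - 1)) (cp C (\<psi> (n - 1)) (snd H n))"
    by (rule assoc[OF oH oH oZ oX cxd[OF H] \<psi>T cmT[OF g], symmetric])
  finally show ?thesis .
qed

text \<open>In the sequence \<open>0 \<rightarrow> D\<^sup>m\<^sup>+\<^sup>1(c) \<rightarrow> Z \<rightarrow> X \<rightarrow> 0\<close>, a degreewise lift \<open>\<psi>\<close> can be corrected in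
  degree \<open>m + 1\<close> by a morphism through \<open>f\<^sub>m\<^sub>+\<^sub>1\<close> so that the square at \<open>m + 1\<close> commutes.\<close>
lemma kernel_disk_correction:
  assumes S: "ses_ch C (disk C (m + 1) c) Z X f g" and c: "c \<in> Ob C" and H: "is_complex C H"
    and \<phi>: "chain_map C H X \<phi>"
    and \<psi>T: "\<And>n. \<psi> n \<in> Hm C (fst H n) (fst Z n)" and g\<psi>: "\<And>n. cp C (g n) (\<psi> n) = \<phi> n"
  shows "\<exists>\<beta>\<in>Hm C (fst H (m + 1)) (fst Z (m + 1)). cp C (g (m + 1)) \<beta> = \<phi> (m + 1) \<and>
           cp C (snd Z (m + 1)) \<beta> = cp C (\<psi> m) (snd H (m + 1))"
proof -
  note s = ses_chD[OF S]
  note oH = cxOb[OF H] and oZ = cxOb[OF s(2)] and oX = cxOb[OF s(3)]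
  have ses: "short_exact C c (fst Z k) (fst X k) (f k) (g k)" if "k = m \<or> k = m + 1" for k
    using s(6)[of k] that by (auto simp: disk_fst)
  have fT: "f (m + 1) \<in> Hm C c (fst Z (m + 1))" using ses_objs[OF ses] by auto
  note dZ = cxd_succ[OF s(2), of m] and df = disk_kernel_differential[OF S c]
  define x where "x = cp C (snd Z (m + 1)) (\<psi> (m + 1))"
  define y where "y = cp C (\<psi> m) (snd H (m + 1))"
  have xT: "x \<in> Hm C (fst H (m + 1)) (fst Z m)" unfolding x_def using cpT[OF oH oZ oZ \<psi>T dZ] .
  have yT: "y \<in> Hm C (fst H (m + 1)) (fst Z m)" unfolding y_def using cpT[OF oH oH oZ cxd_succ[OF H] \<psi>T] .
  have gxy: "cp C (g m) y = cp C (g m) x"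
    using lift_defect[OF H s(2) s(3) s(5) \<phi> \<psi>T g\<psi>, of "m + 1"] unfolding x_def y_def by simp
  define \<delta> where "\<delta> = ad C y (ng C x)"
  have \<delta>T: "\<delta> \<in> Hm C (fst H (m + 1)) (fst Z m)" unfolding \<delta>_def using adT ngT oH oZ xT yT by blast
  have "cp C (g m) \<delta> = zr C (fst H (m + 1)) (fst X m)"
    unfolding \<delta>_def using diff_comp_zero[OF oH oZ oX yT xT _ gxy] ses_objs[OF ses] by blast
  then obtain \<epsilon> where \<epsilon>T: "\<epsilon> \<in> Hm C (fst H (m + 1)) c" and f\<epsilon>: "cp C (f m) \<epsilon> = \<delta>"
    using kernel_factor[OF _ oH \<delta>T] ses[of m] unfolding short_exact_def by blast
  have f\<epsilon>T: "cp C (f (m + 1)) \<epsilon> \<in> Hm C (fst H (m + 1)) (fst Z (m + 1))" using cpT[OF oH c oZ \<epsilon>T] fT by blast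
  define \<beta> where "\<beta> = ad C (\<psi> (m + 1)) (cp C (f (m + 1)) \<epsilon>)"
  have "cp C (g (m + 1)) \<beta> = ad C (\<phi> (m + 1)) (cp C (cp C (g (m + 1)) (f (m + 1))) \<epsilon>)"
    unfolding \<beta>_def using distL[OF oH oZ oX \<psi>T f\<epsilon>T cmT[OF s(5)]]
      assoc[OF oH c oZ oX \<epsilon>T fT cmT[OF s(5)]] g\<psi> by simp
  also have "\<dots> = \<phi> (m + 1)" using ses_gf[OF ses] zr_left[OF oH c oX \<epsilon>T] ad_zr[OF oH oX cmT[OF \<phi>]] by simp
  finally have g\<beta>: "cp C (g (m + 1)) \<beta> = \<phi> (m + 1)" .
  have "cp C (snd Z (m + 1)) \<beta> = ad C x (cp C (cp C (snd Z (m + 1)) (f (m + 1))) \<epsilon>)"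
    unfolding \<beta>_def x_def using distL[OF oH oZ oZ \<psi>T f\<epsilon>T dZ] assoc[OF oH c oZ oZ \<epsilon>T fT dZ] by simp
  also have "\<dots> = y" using df f\<epsilon> ad_sub_cancel[OF oH oZ yT xT] unfolding \<delta>_def by simp
  finally have "cp C (snd Z (m + 1)) \<beta> = cp C (\<psi> m) (snd H (m + 1))" unfolding y_def .
  then show ?thesis using g\<beta> adT[OF oH oZ \<psi>T f\<epsilon>T] unfolding \<beta>_def by blast
qed

text \<open>Once the square at \<open>m + 1\<close> commutes, so does the one at \<open>m + 2\<close>: its two sides agree
  after \<open>g\<^sub>m\<^sub>+\<^sub>1\<close> and after \<open>d\<^sub>m\<^sub>+\<^sub>1\<close>, which are jointly mono since \<open>d\<^sub>m\<^sub>+\<^sub>1 \<circ> f\<^sub>m\<^sub>+\<^sub>1 = f\<^sub>m\<close>.\<close>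
lemma kernel_disk_upper_square:
  assumes S: "ses_ch C (disk C (m + 1) c) Z X f g" and c: "c \<in> Ob C" and H: "is_complex C H"
    and \<phi>: "chain_map C H X \<phi>"
    and \<psi>T: "\<And>n. \<psi> n \<in> Hm C (fst H n) (fst Z n)" and g\<psi>: "\<And>n. cp C (g n) (\<psi> n) = \<phi> n"
    and sq: "cp C (snd Z (m + 1)) (\<psi> (m + 1)) = cp C (\<psi> m) (snd H (m + 1))"
  shows "cp C (snd Z (m + 1 + 1)) (\<psi> (m + 1 + 1)) = cp C (\<psi> (m + 1)) (snd H (m + 1 + 1))"
proof -
  note s = ses_chD[OF S]
  note oH = cxOb[OF H] and oZ = cxOb[OF s(2)] and oX = cxOb[OF s(3)]
  have ses: "short_exact C c (fst Z k) (fst X k) (f k) (g k)" if "k = m \<or> k = m + 1" for k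
    using s(6)[of k] that by (auto simp: disk_fst)
  note dZ = cxd_succ[OF s(2)] and dH = cxd_succ[OF H] and df = disk_kernel_differential[OF S c]
  let ?x = "cp C (snd Z (m + 1 + 1)) (\<psi> (m + 1 + 1))" and ?y = "cp C (\<psi> (m + 1)) (snd H (m + 1 + 1))"
  have xT: "?x \<in> Hm C (fst H (m + 1 + 1)) (fst Z (m + 1))" using cpT[OF oH oZ oZ \<psi>T dZ] .
  have yT: "?y \<in> Hm C (fst H (m + 1 + 1)) (fst Z (m + 1))" using cpT[OF oH oH oZ dH \<psi>T] .
  have "cp C (snd Z (m + 1)) ?x = cp C (cp C (snd Z (m + 1)) (snd Z (m + 1 + 1))) (\<psi> (m + 1 + 1))"
    using assoc[OF oH oZ oZ oZ \<psi>T dZ dZ] by simp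
  also have "\<dots> = zr C (fst H (m + 1 + 1)) (fst Z m)"
    using cxdd_succ[OF s(2), of "m + 1"] zr_left[OF oH oZ oZ \<psi>T] by simp
  finally have rx: "cp C (snd Z (m + 1)) ?x = zr C (fst H (m + 1 + 1)) (fst Z m)" .
  have "cp C (snd Z (m + 1)) ?y = cp C (cp C (\<psi> m) (snd H (m + 1))) (snd H (m + 1 + 1))"
    using assoc[OF oH oH oZ oZ dH \<psi>T dZ] sq by simp
  also have "\<dots> = cp C (\<psi> m) (cp C (snd H (m + 1)) (snd H (m + 1 + 1)))"
    by (rule assoc[OF oH oH oH oZ dH dH \<psi>T, symmetric])
  also have "\<dots> = zr C (fst H (m + 1 + 1)) (fst Z m)"
    using cxdd_succ[OF H, of "m + 1"] zr_right[OF oH oH oZ \<psi>T] by simp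
  finally have ry: "cp C (snd Z (m + 1)) ?y = zr C (fst H (m + 1 + 1)) (fst Z m)" .
  have gxy: "cp C (g (m + 1)) ?x = cp C (g (m + 1)) ?y"
    using lift_defect[OF H s(2) s(3) s(5) \<phi> \<psi>T g\<psi>, of "m + 1 + 1"] by (simp add: ac_simps)
  have mono: "is_mono C c (fst Z m) (cp C (snd Z (m + 1)) (f (m + 1)))" using df ses_mono[OF ses] by simp
  have ker: "is_kernel C (fst Z (m + 1)) (fst X (m + 1)) (g (m + 1)) c (f (m + 1))"
    using ses[of "m + 1"] unfolding short_exact_def by blast
  have gT: "g (m + 1) \<in> Hm C (fst Z (m + 1)) (fst X (m + 1))" using cmT[OF s(5)] .
  show ?thesis by (rule kernel_jointly_mono[OF ker oZ oX oZ oH dZ mono gT xT yT gxy]) (use rx ry in simp)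
qed

text \<open>Hence a chain map into \<open>X\<close> lifts along \<open>g\<close> as soon as each of its components does:
  correct the lift in degree \<open>m + 1\<close>; away from degrees \<open>m + 1, m + 2\<close> the squares commute
  because \<open>g\<close> is mono where the kernel vanishes.\<close>
lemma lift_over_disk_kernel:
  assumes S: "ses_ch C (disk C (m + 1) c) Z X f g" and c: "c \<in> Ob C" and H: "is_complex C H"
    and \<phi>: "\<phi> \<in> chom C H X" and lifts: "\<And>n. \<exists>l\<in>Hm C (fst H n) (fst Z n). cp C (g n) l = \<phi> n"
  shows "\<exists>\<psi>\<in>chom C H Z. ccomp C g \<psi> = \<phi>"
proof -
  note s = ses_chD[OF S]
  note oH = cxOb[OF H] and oZ = cxOb[OF s(2)]
  have \<phi>c: "chain_map C H X \<phi>" using \<phi> unfolding chom_def by blast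
  obtain \<psi>0 where \<psi>0: "\<And>n. \<psi>0 n \<in> Hm C (fst H n) (fst Z n) \<and> cp C (g n) (\<psi>0 n) = \<phi> n"
    using lifts by metis
  obtain \<beta> where \<beta>T: "\<beta> \<in> Hm C (fst H (m + 1)) (fst Z (m + 1))" and g\<beta>: "cp C (g (m + 1)) \<beta> = \<phi> (m + 1)"
    and d\<beta>: "cp C (snd Z (m + 1)) \<beta> = cp C (\<psi>0 m) (snd H (m + 1))"
    using kernel_disk_correction[OF S c H \<phi>c] \<psi>0 by blast
  define \<psi> where "\<psi> = \<psi>0(m + 1 := \<beta>)"
  have \<psi>T: "\<And>n. \<psi> n \<in> Hm C (fst H n) (fst Z n)" and g\<psi>: "\<And>n. cp C (g n) (\<psi> n) = \<phi> n"
    using \<psi>0 \<beta>T g\<beta> unfolding \<psi>_def by auto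
  have sq: "cp C (snd Z (m + 1)) (\<psi> (m + 1)) = cp C (\<psi> m) (snd H (m + 1))"
    using d\<beta> unfolding \<psi>_def by simp
  have "chain_map C H Z \<psi>" unfolding chain_map_def
  proof (intro allI conjI)
    fix n
    show "\<psi> n \<in> Hm C (fst H n) (fst Z n)" by (rule \<psi>T)
    consider "n = m + 1" | "n = m + 1 + 1" | "n - 1 \<noteq> m + 1" "n - 1 \<noteq> m" by fastforce
    then show "cp C (snd Z n) (\<psi> n) = cp C (\<psi> (n - 1)) (snd H n)"
    proof cases
      case 1
      then show ?thesis using sq by simp
    next
      case 2
      then show ?thesis using kernel_disk_upper_square[OF S c H \<phi>c \<psi>T g\<psi> sq] by (simp add: ac_simps)
    next
      case 3
      then have "short_exact C (zobj C) (fst Z (n - 1)) (fst X (n - 1)) (f (n - 1)) (g (n - 1))"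
        using s(6)[of "n - 1"] by (simp add: disk_fst)
      then show ?thesis using ses_zero_kernel_cancel[OF _ oH cpT[OF oH oZ oZ \<psi>T cxd[OF s(2)]]
          cpT[OF oH oH oZ cxd[OF H] \<psi>T]] lift_defect[OF H s(2) s(3) s(5) \<phi>c \<psi>T g\<psi>] by blast
    qed
  qed
  moreover have "ccomp C g \<psi> = \<phi>" using g\<psi> unfolding ccomp_def by auto
  ultimately show ?thesis unfolding chom_def by blast
qed

end
context abelian_category begin

lemma extension_defect:
  assumes Y: "is_complex C Y" and Z: "is_complex C Z" and H: "is_complex C H"
    and f: "chain_map C Y Z f" and \<phi>: "chain_map C Y H \<phi>"
    and \<psi>T: "\<And>n. \<psi> n \<in> Hm C (fst Z n) (fst H n)" and \<psi>f: "\<And>n. cp C (\<psi> n) (f n) = \<phi> n"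
  shows "cp C (cp C (snd H n) (\<psi> n)) (f n) = cp C (cp C (\<psi> (n - 1)) (snd Z n)) (f n)"
proof -
  note oY = cxOb[OF Y] and oZ = cxOb[OF Z] and oH = cxOb[OF H]
  have "cp C (cp C (snd H n) (\<psi> n)) (f n) = cp C (snd H n) (cp C (\<psi> n) (f n))"
    by (rule assoc[OF oY oZ oH oH cmT[OF f] \<psi>T cxd[OF H], symmetric])
  also have "\<dots> = cp C (cp C (\<psi> (n - 1)) (f (n - 1))) (snd Y n)" using \<psi>f cmC[OF \<phi>] by simp
  also have "\<dots> = cp C (\<psi> (n - 1)) (cp C (f (n - 1)) (snd Y n))"
    by (rule assoc[OF oY oY oZ oH cxd[OF Y] cmT[OF f] \<psi>T, symmetric])
  also have "\<dots> = cp C (\<psi> (n - 1)) (cp C (snd Z n) (f n))" using cmC[OF f] by simp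
  also have "\<dots> = cp C (cp C (\<psi> (n - 1)) (snd Z n)) (f n)"
    by (rule assoc[OF oY oZ oZ oH cmT[OF f] cxd[OF Z] \<psi>T])
  finally show ?thesis .
qed

text \<open>In \<open>0 \<rightarrow> Y \<rightarrow> Z \<rightarrow> D\<^sup>m(c) \<rightarrow> 0\<close>, a degreewise extension \<open>\<psi>\<close> can be corrected in degree
  \<open>m - 1\<close> by a morphism through \<open>g\<^sub>m\<^sub>-\<^sub>1\<close> so that the square at \<open>m\<close> commutes.\<close>
lemma cokernel_disk_correction:
  assumes S: "ses_ch C Y Z (disk C m c) f g" and c: "c \<in> Ob C" and H: "is_complex C H"
    and \<phi>: "chain_map C Y H \<phi>"
    and \<psi>T: "\<And>n. \<psi> n \<in> Hm C (fst Z n) (fst H n)" and \<psi>f: "\<And>n. cp C (\<psi> n) (f n) = \<phi> n"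
  shows "\<exists>\<beta>\<in>Hm C (fst Z (m - 1)) (fst H (m - 1)). cp C \<beta> (f (m - 1)) = \<phi> (m - 1) \<and>
           cp C \<beta> (snd Z m) = cp C (snd H m) (\<psi> m)"
proof -
  note s = ses_chD[OF S]
  note oY = cxOb[OF s(1)] and oH = cxOb[OF H] and oZ = cxOb[OF s(2)]
  have ses: "short_exact C (fst Y k) (fst Z k) c (f k) (g k)" if "k = m \<or> k = m - 1" for k
    using s(6)[of k] that by (auto simp: disk_fst)
  have gT: "g (m - 1) \<in> Hm C (fst Z (m - 1)) c" using ses_objs[OF ses] by auto
  note dZ = cxd[OF s(2), of m] and fT = cmT[OF s(4)]
  define x where "x = cp C (snd H m) (\<psi> m)"
  define y where "y = cp C (\<psi> (m - 1)) (snd Z m)"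
  have xT: "x \<in> Hm C (fst Z m) (fst H (m - 1))" unfolding x_def using cpT[OF oZ oH oH \<psi>T cxd[OF H]] .
  have yT: "y \<in> Hm C (fst Z m) (fst H (m - 1))" unfolding y_def using cpT[OF oZ oZ oH dZ \<psi>T] .
  have "cp C (ad C x (ng C y)) (f m) = zr C (fst Y m) (fst H (m - 1))"
    using diff_compR_zero[OF oY oZ oH xT yT fT] extension_defect[OF s(1) s(2) H s(4) \<phi> \<psi>T \<psi>f]
    unfolding x_def y_def by blast
  then obtain \<epsilon> where \<epsilon>T: "\<epsilon> \<in> Hm C c (fst H (m - 1))" and \<epsilon>g: "cp C \<epsilon> (g m) = ad C x (ng C y)"
    using cokernel_factor[OF _ oH adT[OF oZ oH xT ngT[OF oZ oH yT]]] ses[of m]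
    unfolding short_exact_def by blast
  have \<epsilon>gT: "cp C \<epsilon> (g (m - 1)) \<in> Hm C (fst Z (m - 1)) (fst H (m - 1))" using cpT[OF oZ c oH gT \<epsilon>T] .
  define \<beta> where "\<beta> = ad C (\<psi> (m - 1)) (cp C \<epsilon> (g (m - 1)))"
  have "cp C \<beta> (f (m - 1)) = ad C (\<phi> (m - 1)) (cp C \<epsilon> (cp C (g (m - 1)) (f (m - 1))))"
    unfolding \<beta>_def using distR[OF oY oZ oH fT \<psi>T \<epsilon>gT] assoc[OF oY oZ c oH fT gT \<epsilon>T] \<psi>f by simp
  also have "\<dots> = \<phi> (m - 1)"
    using ses_gf[OF ses] zr_right[OF oY c oH \<epsilon>T] ad_zr[OF oY oH cmT[OF \<phi>]] by simp
  finally have \<beta>f: "cp C \<beta> (f (m - 1)) = \<phi> (m - 1)" .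
  have "cp C \<beta> (snd Z m) = ad C y (cp C \<epsilon> (cp C (g (m - 1)) (snd Z m)))"
    unfolding \<beta>_def y_def using distR[OF oZ oZ oH dZ \<psi>T \<epsilon>gT] assoc[OF oZ oZ c oH dZ gT \<epsilon>T] by simp
  also have "\<dots> = x" using disk_quotient_differential[OF S c] \<epsilon>g ad_sub_cancel[OF oZ oH xT yT] by simp
  finally have "cp C \<beta> (snd Z m) = cp C (snd H m) (\<psi> m)" unfolding x_def .
  then show ?thesis using \<beta>f adT[OF oZ oH \<psi>T \<epsilon>gT] unfolding \<beta>_def by blast
qed

text \<open>Once the square at \<open>m\<close> commutes, so does the one at \<open>m - 1\<close>: its two sides agree on
  \<open>f\<^sub>m\<^sub>-\<^sub>1\<close> and on \<open>d\<^sub>m\<close>, which are jointly epi since \<open>g\<^sub>m\<^sub>-\<^sub>1 \<circ> d\<^sub>m = g\<^sub>m\<close>.\<close>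
lemma cokernel_disk_lower_square:
  assumes S: "ses_ch C Y Z (disk C m c) f g" and c: "c \<in> Ob C" and H: "is_complex C H"
    and \<phi>: "chain_map C Y H \<phi>"
    and \<psi>T: "\<And>n. \<psi> n \<in> Hm C (fst Z n) (fst H n)" and \<psi>f: "\<And>n. cp C (\<psi> n) (f n) = \<phi> n"
    and sq: "cp C (snd H m) (\<psi> m) = cp C (\<psi> (m - 1)) (snd Z m)"
  shows "cp C (snd H (m - 1)) (\<psi> (m - 1)) = cp C (\<psi> (m - 1 - 1)) (snd Z (m - 1))"
proof -
  note s = ses_chD[OF S]
  note oY = cxOb[OF s(1)] and oH = cxOb[OF H] and oZ = cxOb[OF s(2)]
  note dZ = cxd[OF s(2)] and dH = cxd[OF H]
  let ?x = "cp C (snd H (m - 1)) (\<psi> (m - 1))" and ?y = "cp C (\<psi> (m - 1 - 1)) (snd Z (m - 1))"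
  have xT: "?x \<in> Hm C (fst Z (m - 1)) (fst H (m - 1 - 1))" using cpT[OF oZ oH oH \<psi>T dH] .
  have yT: "?y \<in> Hm C (fst Z (m - 1)) (fst H (m - 1 - 1))" using cpT[OF oZ oZ oH dZ \<psi>T] .
  have "cp C ?x (snd Z m) = cp C (snd H (m - 1)) (cp C (snd H m) (\<psi> m))"
    using assoc[OF oZ oZ oH oH dZ \<psi>T dH, symmetric] sq by simp
  also have "\<dots> = zr C (fst Z m) (fst H (m - 1 - 1))"
    using assoc[OF oZ oH oH oH \<psi>T dH dH] cxdd[OF H, of m] zr_left[OF oZ oH oH \<psi>T] by (simp add: diff_diff_eq)
  finally have rx: "cp C ?x (snd Z m) = zr C (fst Z m) (fst H (m - 1 - 1))" .
  have "cp C ?y (snd Z m) = zr C (fst Z m) (fst H (m - 1 - 1))"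
    using assoc[OF oZ oZ oZ oH dZ dZ \<psi>T, symmetric] cxdd[OF s(2), of m] zr_right[OF oZ oZ oH \<psi>T]
    by (simp add: diff_diff_eq)
  then have rxy: "cp C ?x (snd Z m) = cp C ?y (snd Z m)" using rx by simp
  have fxy: "cp C ?x (f (m - 1)) = cp C ?y (f (m - 1))"
    using extension_defect[OF s(1) s(2) H s(4) \<phi> \<psi>T \<psi>f, of "m - 1"] .
  have ses: "short_exact C (fst Y k) (fst Z k) c (f k) (g k)" if "k = m \<or> k = m - 1" for k
    using s(6)[of k] that by (auto simp: disk_fst)
  have coker: "is_cokernel C (fst Y (m - 1)) (fst Z (m - 1)) (f (m - 1)) c (g (m - 1))"
    using ses[of "m - 1"] unfolding short_exact_def by blast
  have epi: "is_epi C (fst Z m) c (cp C (g (m - 1)) (snd Z m))"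
    using disk_quotient_differential[OF S c] ses_epi[OF ses] by simp
  show ?thesis by (rule cokernel_jointly_epi[OF coker oY oZ oZ oH dZ epi cmT[OF s(4)] xT yT fxy rxy])
qed

lemma extend_over_disk_cokernel:
  assumes S: "ses_ch C Y Z (disk C m c) f g" and c: "c \<in> Ob C" and H: "is_complex C H"
    and \<phi>: "\<phi> \<in> chom C Y H" and exts: "\<And>n. \<exists>l\<in>Hm C (fst Z n) (fst H n). cp C l (f n) = \<phi> n"
  shows "\<exists>\<psi>\<in>chom C Z H. ccomp C \<psi> f = \<phi>"
proof -
  note s = ses_chD[OF S]
  note oH = cxOb[OF H] and oZ = cxOb[OF s(2)]
  have \<phi>c: "chain_map C Y H \<phi>" using \<phi> unfolding chom_def by blast
  obtain \<psi>0 where \<psi>0: "\<And>n. \<psi>0 n \<in> Hm C (fst Z n) (fst H n) \<and> cp C (\<psi>0 n) (f n) = \<phi> n"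
    using exts by metis
  obtain \<beta> where \<beta>T: "\<beta> \<in> Hm C (fst Z (m - 1)) (fst H (m - 1))" and \<beta>f: "cp C \<beta> (f (m - 1)) = \<phi> (m - 1)"
    and d\<beta>: "cp C \<beta> (snd Z m) = cp C (snd H m) (\<psi>0 m)"
    using cokernel_disk_correction[OF S c H \<phi>c] \<psi>0 by blast
  define \<psi> where "\<psi> = \<psi>0(m - 1 := \<beta>)"
  have \<psi>T: "\<And>n. \<psi> n \<in> Hm C (fst Z n) (fst H n)" and \<psi>f: "\<And>n. cp C (\<psi> n) (f n) = \<phi> n"
    using \<psi>0 \<beta>T \<beta>f unfolding \<psi>_def by auto
  have sq: "cp C (snd H m) (\<psi> m) = cp C (\<psi> (m - 1)) (snd Z m)"
    using d\<beta> unfolding \<psi>_def by simp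
  have "chain_map C Z H \<psi>" unfolding chain_map_def
  proof (intro allI conjI)
    fix n
    show "\<psi> n \<in> Hm C (fst Z n) (fst H n)" by (rule \<psi>T)
    consider "n = m" | "n = m - 1" | "n \<noteq> m" "n \<noteq> m - 1" by blast
    then show "cp C (snd H n) (\<psi> n) = cp C (\<psi> (n - 1)) (snd Z n)"
    proof cases
      case 1
      then show ?thesis using sq by simp
    next
      case 2
      then show ?thesis using cokernel_disk_lower_square[OF S c H \<phi>c \<psi>T \<psi>f sq] by simp
    next
      case 3
      then have "short_exact C (fst Y n) (fst Z n) (zobj C) (f n) (g n)"
        using s(6)[of n] by (simp add: disk_fst)
      then show ?thesis using ses_zero_cokernel_cancel[OF _ oH cpT[OF oZ oH oH \<psi>T cxd[OF H]]
          cpT[OF oZ oZ oH cxd[OF s(2)] \<psi>T]] extension_defect[OF s(1) s(2) H s(4) \<phi>c \<psi>T \<psi>f] by blast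
    qed
  qed
  moreover have "ccomp C \<psi> f = \<phi>" using \<psi>f unfolding ccomp_def by auto
  ultimately show ?thesis unfolding chom_def by blast
qed

text \<open>A chain map \<open>D\<^sup>m\<^sup>+\<^sup>1(c) \<rightarrow> H\<close> is given by \<open>a : c \<rightarrow> H\<^sub>m\<^sub>+\<^sub>1\<close>; it extends along \<open>f\<close> as
  soon as \<open>a\<close> extends along \<open>f\<^sub>m\<close> to some \<open>\<rho>\<close>: take \<open>d \<rho> + \<rho> d\<close>.\<close>
lemma extend_from_disk:
  assumes S: "ses_ch C (disk C (m + 1) c) Z X f g" and c: "c \<in> Ob C" and H: "is_complex C H"
    and ext: "\<And>a. a \<in> Hm C c (fst H (m + 1)) \<Longrightarrow> \<exists>\<rho>\<in>Hm C (fst Z m) (fst H (m + 1)). cp C \<rho> (f m) = a"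
  shows "has_extensions C H (disk C (m + 1) c) Z f"
  unfolding has_extensions_def
proof
  fix \<phi> assume "\<phi> \<in> chom C (disk C (m + 1) c) H"
  then have \<phi>: "chain_map C (disk C (m + 1) c) H \<phi>" unfolding chom_def by blast
  note s = ses_chD[OF S]
  note oZ = cxOb[OF s(2)] and oH = cxOb[OF H]
  obtain \<rho> where \<rho>T: "\<rho> \<in> Hm C (fst Z m) (fst H (m + 1))" and \<rho>f: "cp C \<rho> (f m) = \<phi> (m + 1)"
    using ext cmT[OF \<phi>, of "m + 1"] by (auto simp: disk_fst)
  let ?\<psi> = "boundary_map C Z H m \<rho>"
  have \<psi>: "chain_map C Z H ?\<psi>" using boundary_map_chain[OF s(2) H \<rho>T] .
  have fT: "f (m + 1) \<in> Hm C c (fst Z (m + 1))" using cmT[OF s(4), of "m + 1"] by (simp add: disk_fst)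
  have "ccomp C ?\<psi> f (m + 1) = cp C (cp C \<rho> (snd Z (m + 1))) (f (m + 1))"
    unfolding ccomp_def boundary_map_def by simp
  also have "\<dots> = \<phi> (m + 1)"
    using assoc[OF c oZ oZ oH fT cxd_succ[OF s(2)] \<rho>T, symmetric] disk_kernel_differential[OF S c] \<rho>f
    by simp
  finally have "ccomp C ?\<psi> f = \<phi>"
    using chain_map_from_disk_eq[OF c H chain_comp[OF s(1) s(2) H s(4) \<psi>] \<phi>] by blast
  then show "\<exists>\<psi>\<in>chom C Z H. ccomp C \<psi> f = \<phi>" using \<psi> unfolding chom_def by blast
qed

text \<open>Dually, a chain map \<open>H \<rightarrow> D\<^sup>m(c)\<close> is given by \<open>b : H\<^sub>m\<^sub>-\<^sub>1 \<rightarrow> c\<close>; it lifts along \<open>g\<close> as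
  soon as \<open>b\<close> lifts along \<open>g\<^sub>m\<close> to some \<open>l\<close>: take \<open>d l + l d\<close>.\<close>
lemma lift_into_disk:
  assumes S: "ses_ch C Y Z (disk C m c) f g" and c: "c \<in> Ob C" and H: "is_complex C H"
    and lift: "\<And>b. b \<in> Hm C (fst H (m - 1)) c \<Longrightarrow> \<exists>l\<in>Hm C (fst H (m - 1)) (fst Z m). cp C (g m) l = b"
  shows "has_lifts C H Z (disk C m c) g"
  unfolding has_lifts_def
proof
  fix \<phi> assume "\<phi> \<in> chom C H (disk C m c)"
  then have \<phi>: "chain_map C H (disk C m c) \<phi>" unfolding chom_def by blast
  note s = ses_chD[OF S]
  note oZ = cxOb[OF s(2)] and oH = cxOb[OF H]
  obtain l where lT: "l \<in> Hm C (fst H (m - 1)) (fst Z m)" and gl: "cp C (g m) l = \<phi> (m - 1)"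
    using lift cmT[OF \<phi>, of "m - 1"] by (auto simp: disk_fst)
  let ?\<psi> = "boundary_map C H Z (m - 1) l"
  have \<psi>: "chain_map C H Z ?\<psi>" using boundary_map_chain[OF H s(2)] lT by simp
  have gT: "g (m - 1) \<in> Hm C (fst Z (m - 1)) c" using cmT[OF s(5), of "m - 1"] by (simp add: disk_fst)
  have "ccomp C g ?\<psi> (m - 1) = cp C (g (m - 1)) (cp C (snd Z m) l)"
    unfolding ccomp_def boundary_map_def by simp
  also have "\<dots> = \<phi> (m - 1)"
    using assoc[OF oH oZ oZ c lT cxd[OF s(2)] gT] disk_quotient_differential[OF S c] gl by simp
  finally have "ccomp C g ?\<psi> = \<phi>"
    using chain_map_into_disk_eq[OF c H chain_comp[OF H s(2) s(3) \<psi> s(5)] \<phi>] by blast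
  then show "\<exists>\<psi>\<in>chom C H Z. ccomp C g \<psi> = \<phi>" using \<psi> unfolding chom_def by blast
qed

end
context abelian_category begin

lemma Hom_cov_exact_subclass_iff:
  assumes S: "ses_ch C A B D f g" and sub: "\<H>' \<subseteq> \<H>" and cx: "\<And>H. H \<in> \<H> \<Longrightarrow> is_complex C H"
    and up: "\<forall>H\<in>\<H>'. has_lifts C H B D g \<Longrightarrow> \<forall>H\<in>\<H>. has_lifts C H B D g"
  shows "Hom_cov_exact C \<H> A B D f g \<longleftrightarrow> Hom_cov_exact C \<H>' A B D f g"
proof -
  have "Hom_cov_exact C \<K> A B D f g \<longleftrightarrow> (\<forall>H\<in>\<K>. has_lifts C H B D g)" if "\<K> \<subseteq> \<H>" for \<K>
    using hom_exact_cov_iff[OF S cx] that unfolding Hom_cov_exact_def by blast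
  then show ?thesis using sub up by blast
qed

lemma Hom_contra_exact_subclass_iff:
  assumes S: "ses_ch C A B D f g" and sub: "\<H>' \<subseteq> \<H>" and cx: "\<And>H. H \<in> \<H> \<Longrightarrow> is_complex C H"
    and up: "\<forall>H\<in>\<H>'. has_extensions C H A B f \<Longrightarrow> \<forall>H\<in>\<H>. has_extensions C H A B f"
  shows "Hom_contra_exact C \<H> A B D f g \<longleftrightarrow> Hom_contra_exact C \<H>' A B D f g"
proof -
  have "Hom_contra_exact C \<K> A B D f g \<longleftrightarrow> (\<forall>H\<in>\<K>. has_extensions C H A B f)" if "\<K> \<subseteq> \<H>" for \<K>
    using hom_exact_contra_iff[OF S cx] that unfolding Hom_contra_exact_def by blast
  then show ?thesis using sub up by blast
qed

lemma dw_lifts_kernel_disk: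
  assumes S: "ses_ch C (disk C (m + 1) c) Z X f g" and c: "c \<in> Ob C" and F: "\<F> \<subseteq> Ob C"
    and tl: "\<forall>H\<in>tilde C \<F>. has_lifts C H Z X g"
  shows "\<forall>H\<in>dwtilde C \<F>. has_lifts C H Z X g"
proof (intro ballI)
  fix H assume "H \<in> dwtilde C \<F>"
  then have H: "is_complex C H" and HF: "\<And>n. fst H n \<in> \<F>" unfolding dwtilde_def by auto
  note s = ses_chD[OF S]
  show "has_lifts C H Z X g" unfolding has_lifts_def
  proof
    fix \<phi> assume \<phi>: "\<phi> \<in> chom C H X"
    have "\<exists>l\<in>Hm C (fst H n) (fst Z n). cp C (g n) l = \<phi> n" for n
      using lift_object_from_tilde[OF tl HF _ s(2) s(3) s(5)] F HF cmT \<phi> unfolding chom_def by blast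
    then show "\<exists>\<psi>\<in>chom C H Z. ccomp C g \<psi> = \<phi>" by (rule lift_over_disk_kernel[OF S c H \<phi>])
  qed
qed

lemma dw_extensions_kernel_disk:
  assumes S: "ses_ch C (disk C (m + 1) c) Z X f g" and c: "c \<in> Ob C" and F: "\<F> \<subseteq> Ob C"
    and tl: "\<forall>H\<in>tilde C \<F>. has_extensions C H (disk C (m + 1) c) Z f"
  shows "\<forall>H\<in>dwtilde C \<F>. has_extensions C H (disk C (m + 1) c) Z f"
proof (intro ballI)
  fix H assume "H \<in> dwtilde C \<F>"
  then have H: "is_complex C H" and HF: "\<And>n. fst H n \<in> \<F>" unfolding dwtilde_def by auto
  note s = ses_chD[OF S]
  have "\<exists>\<rho>\<in>Hm C (fst Z m) (fst H (m + 1)). cp C \<rho> (f m) = a" if "a \<in> Hm C c (fst H (m + 1))" for a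
  proof -
    have "a \<in> Hm C (fst (disk C (m + 1) c) m) (fst H (m + 1))" using that by (simp add: disk_fst)
    then show ?thesis using extend_object_from_tilde[OF tl HF _ s(1) s(2) s(4)] F HF by blast
  qed
  then show "has_extensions C H (disk C (m + 1) c) Z f" by (rule extend_from_disk[OF S c H])
qed

lemma dw_lifts_cokernel_disk:
  assumes S: "ses_ch C Y Z (disk C m c) f g" and c: "c \<in> Ob C" and F: "\<F> \<subseteq> Ob C"
    and tl: "\<forall>H\<in>tilde C \<F>. has_lifts C H Z (disk C m c) g"
  shows "\<forall>H\<in>dwtilde C \<F>. has_lifts C H Z (disk C m c) g"
proof (intro ballI)
  fix H assume "H \<in> dwtilde C \<F>"
  then have H: "is_complex C H" and HF: "\<And>n. fst H n \<in> \<F>" unfolding dwtilde_def by auto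
  note s = ses_chD[OF S]
  have "\<exists>l\<in>Hm C (fst H (m - 1)) (fst Z m). cp C (g m) l = b" if "b \<in> Hm C (fst H (m - 1)) c" for b
  proof -
    have "b \<in> Hm C (fst H (m - 1)) (fst (disk C m c) m)" using that by (simp add: disk_fst)
    then show ?thesis using lift_object_from_tilde[OF tl HF _ s(2) s(3) s(5)] F HF by blast
  qed
  then show "has_lifts C H Z (disk C m c) g" by (rule lift_into_disk[OF S c H])
qed

lemma dw_extensions_cokernel_disk:
  assumes S: "ses_ch C Y Z (disk C m c) f g" and c: "c \<in> Ob C" and F: "\<F> \<subseteq> Ob C"
    and tl: "\<forall>H\<in>tilde C \<F>. has_extensions C H Y Z f"
  shows "\<forall>H\<in>dwtilde C \<F>. has_extensions C H Y Z f"
proof (intro ballI)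
  fix H assume "H \<in> dwtilde C \<F>"
  then have H: "is_complex C H" and HF: "\<And>n. fst H n \<in> \<F>" unfolding dwtilde_def by auto
  note s = ses_chD[OF S]
  show "has_extensions C H Y Z f" unfolding has_extensions_def
  proof
    fix \<phi> assume \<phi>: "\<phi> \<in> chom C Y H"
    have "\<exists>l\<in>Hm C (fst Z n) (fst H n). cp C l (f n) = \<phi> n" for n
      using extend_object_from_tilde[OF tl HF _ s(1) s(2) s(4)] F HF cmT \<phi> unfolding chom_def by blast
    then show "\<exists>\<psi>\<in>chom C Z H. ccomp C \<psi> f = \<phi>" by (rule extend_over_disk_cokernel[OF S c H \<phi>])
  qed
qed

end

theorem proposition4p4:
  fixes C :: "('o,'m) abcat" and \<F> \<G> :: "'o set" and m :: int and c :: 'o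
    and Z X Y :: "('o,'m) cx" and f g f' g' :: "int \<Rightarrow> 'm"
  assumes "abelian C"
    and "\<F> \<subseteq> Ob C" and "\<G> \<subseteq> Ob C"
    and "closed_ext C \<F>" and "closed_ext C \<G>"
    and "c \<in> Ob C"
    and S: "ses_ch C (disk C (m + 1) c) Z X f g"
    and S': "ses_ch C Y Z (disk C m c) f' g'"
  shows "(Hom_cov_exact C (dwtilde C \<F>) (disk C (m + 1) c) Z X f g \<longleftrightarrow>
            Hom_cov_exact C (tilde C \<F>) (disk C (m + 1) c) Z X f g) \<and>
         (Hom_contra_exact C (dwtilde C \<G>) (disk C (m + 1) c) Z X f g \<longleftrightarrow>
            Hom_contra_exact C (tilde C \<G>) (disk C (m + 1) c) Z X f g) \<and>
         (Hom_cov_exact C (dwtilde C \<F>) Y Z (disk C m c) f' g' \<longleftrightarrow>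
            Hom_cov_exact C (tilde C \<F>) Y Z (disk C m c) f' g') \<and>
         (Hom_contra_exact C (dwtilde C \<G>) Y Z (disk C m c) f' g' \<longleftrightarrow>
            Hom_contra_exact C (tilde C \<G>) Y Z (disk C m c) f' g')"
proof -
  interpret abelian_category C by unfold_locales (rule assms(1))
  have subF: "tilde C \<F> \<subseteq> dwtilde C \<F>" and subG: "tilde C \<G> \<subseteq> dwtilde C \<G>"
    using tilde_subset_dwtilde assms(4,5) by auto
  have cxF: "\<And>H. H \<in> dwtilde C \<F> \<Longrightarrow> is_complex C H"
    and cxG: "\<And>H. H \<in> dwtilde C \<G> \<Longrightarrow> is_complex C H" unfolding dwtilde_def by auto
  show ?thesis
    using Hom_cov_exact_subclass_iff[OF S subF cxF dw_lifts_kernel_disk[OF S assms(6,2)]]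
      Hom_contra_exact_subclass_iff[OF S subG cxG dw_extensions_kernel_disk[OF S assms(6,3)]]
      Hom_cov_exact_subclass_iff[OF S' subF cxF dw_lifts_cokernel_disk[OF S' assms(6,2)]]
      Hom_contra_exact_subclass_iff[OF S' subG cxG dw_extensions_cokernel_disk[OF S' assms(6,3)]]
    by blast
qed
end
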